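(* Let $n,N\in\mathbb N$, $\mathcal G=(\mathbb H^n)^N$, let $d\in C^\infty(\mathcal G\setminus\{0\})$ be a homogeneous norm on $\mathcal G$, and fix $p\ge2$, $\theta\in\mathbb R$. Define \[ Z_d=\frac{n+1}{n}\,\frac{z}{d}-\frac{p\theta}{2n}\,\frac{1}{d^2}\sum_{j=1}^Nt_j\,\nabla^{(j)\perp}d . \] Then for all $u\in C_c^\infty(\mathcal G\setminus\{0\})$, \[ \int_{\mathcal G}\frac{|u|^{p-2}u\,\mathcal Eu}{d^{p\theta}}\,dz\,dt=\int_{\mathcal G}\frac{|u|^{p-2}u}{d^{p\theta-1}}\,\langle\nabla_{\mathcal G}u,Z_d\rangle\,dz\,dt . \]
   Context: $\mathcal G=(\mathbb H^n)^N$ is $\mathbb R^{2nN}\times\mathbb R^N$ with coordinates $z=(z^{(1)},\dots,z^{(N)})$, $z^{(j)}\in\mathbb R^{2n}$, $t=(t_1,\dots,t_N)$; group law $(z,t)\circ(\eta,\tau)=(z+\eta,t+\tau+\tfrac12(\langle B_{\mathbb H}z^{(1)},\eta^{(1)}\rangle,\dots,\langle B_{\mathbb H}z^{(N)},\eta^{(N)}\rangle))$ with $B_{\mathbb H}=\mathrm{diag}\left(\begin{pmatrix}0&4\\-4&0\end{pmatrix},\dots\right)\in\mathbb R^{2n\times2n}$; dilations $\delta_\gamma(z,t)=(\gamma z,\gamma^2t)$; homogeneous dimension $Q=2N(n+1)$. Horizontal fields $X^{(j)}_{2i-1}=\partial_{z^{(j)}_{2i-1}}+2z^{(j)}_{2i}\partial_{t_j}$,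 $X^{(j)}_{2i}=\partial_{z^{(j)}_{2i}}-2z^{(j)}_{2i-1}\partial_{t_j}$; $\nabla_{\mathcal G}$ is the vector of all of them, and horizontal vector fields are identified with $\mathbb R^{2nN}$-valued functions via this basis. $\nabla^{(j)\perp}d$ is the horizontal field with components $(-X^{(j)}_2d,X^{(j)}_1d,\dots,-X^{(j)}_{2n}d,X^{(j)}_{2n-1}d)$ in the $j$-th block and zero elsewhere. $\mathcal E=\sum_{j}\big(\sum_{k=1}^{2n}z^{(j)}_k\partial_{z^{(j)}_k}+2t_j\partial_{t_j}\big)$. A homogeneous norm is a continuous $d\ge0$ with $d(\delta_\lambda(z,t))=\lambda d(z,t)$, $d>0$ off the origin, and $d((z,t)\circ(\eta,\tau))\le d(z,t)+d(\eta,\tau)$. *)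

theory Defs
  imports "HOL-Analysis.Analysis"
begin

text \<open>Points of G = (H^n)^N are pairs (z,t) with z :: real^2^'n^'N (z $ j $ i $ 1 is
  z^(j)_(2i-1), z $ j $ i $ 2 is z^(j)_(2i)) and t :: real^'N. Thus n = CARD('n), N = CARD('N).\<close>

type_synonym ('n,'N) heis = "(real^2^'n^'N) \<times> (real^'N)"

fun Ck_on :: "nat \<Rightarrow> 'a::euclidean_space set \<Rightarrow> ('a \<Rightarrow> real) \<Rightarrow> bool" where
  "Ck_on 0 S f = continuous_on S f"
| "Ck_on (Suc k) S f = (continuous_on S f \<and> (\<forall>x\<in>S. f differentiable (at x)) \<and>
      (\<forall>v. Ck_on k S (\<lambda>x. frechet_derivative f (at x) v)))"

definition smooth_on :: "'a::euclidean_space set \<Rightarrow> ('a \<Rightarrow> real) \<Rightarrow> bool" where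
  "smooth_on S f = (\<forall>k. Ck_on k S f)"

text \<open>Group law: (z,t)o(eta,tau) = (z+eta, t+tau+1/2(<B z^(j), eta^(j)>)_j) with
  B = diag([[0,4],[-4,0]],...), so 1/2<B z^(j),eta^(j)> = 2 sum_i (z_{2i} eta_{2i-1} - z_{2i-1} eta_{2i}).\<close>
definition heis_mult :: "('n::finite,'N::finite) heis \<Rightarrow> ('n,'N) heis \<Rightarrow> ('n,'N) heis" where
  "heis_mult x y = (fst x + fst y,
     snd x + snd y + (\<chi> j. (1/2) * (\<Sum>i\<in>UNIV.
        4 * (fst x $ j $ i $ 2) * (fst y $ j $ i $ 1) - 4 * (fst x $ j $ i $ 1) * (fst y $ j $ i $ 2))))"

definition heis_dil :: "real \<Rightarrow> ('n::finite,'N::finite) heis \<Rightarrow> ('n,'N) heis" where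
  "heis_dil \<gamma> x = (\<gamma> *\<^sub>R fst x, \<gamma>\<^sup>2 *\<^sub>R snd x)"

definition homogeneous_norm :: "(('n::finite,'N::finite) heis \<Rightarrow> real) \<Rightarrow> bool" where
  "homogeneous_norm d \<longleftrightarrow> continuous_on UNIV d \<and> (\<forall>x. d x \<ge> 0)
     \<and> (\<forall>c>0. \<forall>x. d (heis_dil c x) = c * d x)
     \<and> (\<forall>x. x \<noteq> 0 \<longrightarrow> d x > 0)
     \<and> (\<forall>x y. d (heis_mult x y) \<le> d x + d y)"

text \<open>Horizontal vector fields: hfield j i 1 = X^(j)_(2i-1) = d/dz^(j)_(2i-1) + 2 z^(j)_(2i) d/dt_j,
  hfield j i 2 = X^(j)_(2i) = d/dz^(j)_(2i) - 2 z^(j)_(2i-1) d/dt_j, as vectors at the point x.\<close>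
definition hfield :: "'N \<Rightarrow> 'n \<Rightarrow> 2 \<Rightarrow> ('n::finite,'N::finite) heis \<Rightarrow> ('n,'N) heis" where
  "hfield j i k x =
     ((\<chi> j' i' k'. if j' = j \<and> i' = i \<and> k' = k then 1 else 0),
      (\<chi> j'. if j' = j then (if k = 1 then 2 * (fst x $ j $ i $ 2) else - 2 * (fst x $ j $ i $ 1)) else 0))"

definition hgrad :: "(('n::finite,'N::finite) heis \<Rightarrow> real) \<Rightarrow> ('n,'N) heis \<Rightarrow> real^2^'n^'N" where
  "hgrad f x = (\<chi> j i k. frechet_derivative f (at x) (hfield j i k x))"

definition hperp :: "'N \<Rightarrow> (('n::finite,'N::finite) heis \<Rightarrow> real) \<Rightarrow> ('n,'N) heis \<Rightarrow> real^2^'n^'N" where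
  "hperp j f x = (\<chi> j' i k. if j' = j then (if k = 1 then - (hgrad f x $ j $ i $ 2)
                                             else hgrad f x $ j $ i $ 1) else 0)"

definition euler_op :: "(('n::finite,'N::finite) heis \<Rightarrow> real) \<Rightarrow> ('n,'N) heis \<Rightarrow> real" where
  "euler_op u x = frechet_derivative u (at x) (fst x, 2 *\<^sub>R snd x)"

definition Zd :: "real \<Rightarrow> real \<Rightarrow> (('n::finite,'N::finite) heis \<Rightarrow> real) \<Rightarrow> ('n,'N) heis \<Rightarrow> real^2^'n^'N" where
  "Zd p \<theta> d x =
     ((real CARD('n) + 1) / real CARD('n) / d x) *\<^sub>R fst x
     - (p * \<theta> / (2 * real CARD('n)) / (d x)\<^sup>2) *\<^sub>R (\<Sum>j\<in>UNIV. (snd x $ j) *\<^sub>R hperp j d x)"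

end

theory Submission
  imports Defs
begin

text \<open>Put w = |u|^p/p, so that |u|^(p-2) u grad u = grad w: both integrands are first derivatives of w
  against weights built from d, and both integrals are computed by moving these derivatives onto the
  weights. All vector fields involved are affine, and integrating by parts along an affine field
  x |-> A x + b produces its divergence, the trace of A: the dilation generator (z, 2t) has
  divergence Q, the field (z, 0) has divergence 2nN and the horizontal fields X_k are divergence free.
  On the left, Euler's identity E d = d for the homogeneous norm leaves (p theta - Q) times the
  integral of d^(-p theta) w. On the right, the term with t_j nabla^(j)perp d pairs X_(2i) w with
  X_(2i-1) d antisymmetrically; after integration by parts the second derivatives of d cancel except
  for the commutator [X_(2i), X_(2i-1)] = 4 d/dt_j, and the constants in Z_d are exactly those for
  which the z- and t-derivatives of d then recombine into E d = d, giving the same value.\<close>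

section \<open>C1 and C2 functions\<close>

definition C1_on :: "'a::real_normed_vector set \<Rightarrow> ('a \<Rightarrow> real) \<Rightarrow> ('a \<Rightarrow> 'a \<Rightarrow> real) \<Rightarrow> bool" where
  "C1_on S f f' \<longleftrightarrow> (\<forall>x\<in>S. (f has_derivative f' x) (at x)) \<and> (\<forall>v. continuous_on S (\<lambda>x. f' x v))"

definition C2_on :: "'a::real_normed_vector set \<Rightarrow> ('a \<Rightarrow> real) \<Rightarrow> ('a \<Rightarrow> 'a \<Rightarrow> real)
    \<Rightarrow> ('a \<Rightarrow> 'a \<Rightarrow> 'a \<Rightarrow> real) \<Rightarrow> bool" where
  "C2_on S f f' f'' \<longleftrightarrow> C1_on S f f' \<and> (\<forall>a. C1_on S (\<lambda>x. f' x a) (\<lambda>x. f'' x a))"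

lemma C1_onD: "C1_on S f f' \<Longrightarrow> x \<in> S \<Longrightarrow> (f has_derivative f' x) (at x)"
  unfolding C1_on_def by blast

lemma C1_on_continuous_derivative: "C1_on S f f' \<Longrightarrow> continuous_on S (\<lambda>x. f' x v)"
  unfolding C1_on_def by blast

lemma C1_on_linear_derivative: "C1_on S f f' \<Longrightarrow> x \<in> S \<Longrightarrow> linear (f' x)"
  using C1_onD has_derivative_linear by blast

lemma C1_on_imp_continuous_on: "C1_on S f f' \<Longrightarrow> continuous_on S f"
  unfolding C1_on_def by (meson continuous_at_imp_continuous_on has_derivative_continuous)

lemma C1_on_bounded_linear: "bounded_linear l \<Longrightarrow> C1_on S l (\<lambda>x. l)"
  unfolding C1_on_def by (auto intro: bounded_linear_imp_has_derivative)

lemma C1_on_add: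
  "C1_on S f f' \<Longrightarrow> C1_on S g g' \<Longrightarrow> C1_on S (\<lambda>x. f x + g x) (\<lambda>x v. f' x v + g' x v)"
  unfolding C1_on_def by (auto intro!: has_derivative_add continuous_intros)

lemma C1_on_mult:
  assumes "C1_on S f f'" "C1_on S g g'"
  shows "C1_on S (\<lambda>x. f x * g x) (\<lambda>x v. f x * g' x v + f' x v * g x)"
  using assms C1_on_imp_continuous_on[OF assms(1)] C1_on_imp_continuous_on[OF assms(2)]
  unfolding C1_on_def by (auto intro!: has_derivative_mult continuous_intros)

lemma C1_on_sum:
  assumes "\<And>i. i \<in> I \<Longrightarrow> C1_on S (f i) (f' i)"
  shows "C1_on S (\<lambda>x. \<Sum>i\<in>I. f i x) (\<lambda>x v. \<Sum>i\<in>I. f' i x v)"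
  using assms unfolding C1_on_def by (auto intro!: has_derivative_sum continuous_on_sum)

lemma C1_on_compose:
  assumes "C1_on S f f'" and "\<And>x. x \<in> S \<Longrightarrow> (\<phi> has_real_derivative \<phi>' (f x)) (at (f x))"
    and "continuous_on (f ` S) \<phi>'"
  shows "C1_on S (\<lambda>x. \<phi> (f x)) (\<lambda>x v. \<phi>' (f x) * f' x v)"
proof -
  have "((\<lambda>x. \<phi> (f x)) has_derivative (\<lambda>v. \<phi>' (f x) * f' x v)) (at x)" if "x \<in> S" for x
    using has_derivative_compose[OF C1_onD[OF assms(1) that] assms(2)[OF that, unfolded has_field_derivative_def]] .
  moreover have "continuous_on S (\<lambda>x. \<phi>' (f x) * f' x v)" for v
    using continuous_on_compose2[OF assms(3) C1_on_imp_continuous_on[OF assms(1)]]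
      C1_on_continuous_derivative[OF assms(1)] by (intro continuous_on_mult) auto
  ultimately show ?thesis
    unfolding C1_on_def by blast
qed

lemma C1_on_cong:
  assumes "open S" "C1_on S f f'" "\<And>x. x \<in> S \<Longrightarrow> g x = f x" "\<And>x. x \<in> S \<Longrightarrow> g' x = f' x"
  shows "C1_on S g g'"
  unfolding C1_on_def
proof safe
  show "(g has_derivative g' x) (at x)" if "x \<in> S" for x
    using has_derivative_transform_within_open[OF C1_onD[OF assms(2) that] assms(1) that] assms(3,4) that
    by auto
  show "continuous_on S (\<lambda>x. g' x v)" for v
    by (rule continuous_on_eq[OF C1_on_continuous_derivative[OF assms(2)]]) (simp add: assms(4))
qed

lemma C1_on_powr:
  assumes "C1_on S f f'" "\<forall>x\<in>S. 0 < f x"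
  shows "C1_on S (\<lambda>x. f x powr r) (\<lambda>x v. r * f x powr (r - 1) * f' x v)"
proof (rule C1_on_compose[OF assms(1)])
  show "((\<lambda>s. s powr r) has_real_derivative r * f x powr (r - 1)) (at (f x))" if "x \<in> S" for x
    using has_real_derivative_powr[OF bspec[OF assms(2) that]] .
  have "continuous_on {0<..} (\<lambda>s::real. r * s powr (r - 1))"
    by (intro continuous_intros) auto
  then show "continuous_on (f ` S) (\<lambda>s. r * s powr (r - 1))"
    by (rule continuous_on_subset) (use assms(2) in force)
qed

lemma C1_on_continuous_along:
  fixes f :: "'a::euclidean_space \<Rightarrow> real"
  assumes "C1_on S f f'" "continuous_on S V"
  shows "continuous_on S (\<lambda>x. f' x (V x))"
proof -
  have eq: "(\<Sum>e\<in>Basis. (V x \<bullet> e) * f' x e) = f' x (V x)" if "x \<in> S" for x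
    using C1_on_linear_derivative[OF assms(1) that]
    by (subst (2) euclidean_representation[symmetric, of "V x"]) (simp add: linear_sum linear_scale)
  have "continuous_on S (\<lambda>x. \<Sum>e\<in>Basis. (V x \<bullet> e) * f' x e)"
    using assms C1_on_continuous_derivative[OF assms(1)] by (intro continuous_intros)
  then show ?thesis
    by (rule continuous_on_eq) (simp add: eq)
qed

lemma has_derivative_eq_0_outside:
  assumes "(f has_derivative f') (at x)" "closed K" "{y. f y \<noteq> 0} \<subseteq> K" "x \<notin> K"
  shows "f' = (\<lambda>_. 0)"
proof -
  have "((\<lambda>_. 0) has_derivative (\<lambda>_. 0)) (at x)"
    by simp
  then have "(f has_derivative (\<lambda>_. 0)) (at x)"
    by (rule has_derivative_transform_within_open[where s="- K"]) (use assms(2-4) in auto)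
  with assms(1) show ?thesis
    by (rule has_derivative_unique)
qed

lemma C1_on_derivative_eq_0:
  assumes "C1_on S f f'" "closed K" "{y. f y \<noteq> 0} \<subseteq> K" "x \<in> S" "x \<notin> K"
  shows "f' x v = 0"
  using has_derivative_eq_0_outside[OF C1_onD[OF assms(1,4)] assms(2,3,5)] by simp

lemma C2_on_C1_on: "C2_on S f f' f'' \<Longrightarrow> C1_on S f f'"
  unfolding C2_on_def by blast

lemma C2_on_C1_on_derivative: "C2_on S f f' f'' \<Longrightarrow> C1_on S (\<lambda>x. f' x a) (\<lambda>x. f'' x a)"
  unfolding C2_on_def by blast

lemma C2_on_second_derivative_linear:
  assumes "open S" "C2_on S f f' f''" "x \<in> S"
  shows "linear (\<lambda>a. f'' x a v)"
proof -
  have lin: "linear (f' y)" if "y \<in> S" for y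
    using C1_on_linear_derivative[OF C2_on_C1_on[OF assms(2)] that] .
  have D: "((\<lambda>y. f' y a) has_derivative f'' x a) (at x)" for a
    using C1_onD[OF C2_on_C1_on_derivative[OF assms(2)] assms(3)] .
  have "f'' x (a + b) = (\<lambda>v. f'' x a v + f'' x b v)" for a b
  proof (rule has_derivative_unique[OF D])
    show "((\<lambda>y. f' y (a + b)) has_derivative (\<lambda>v. f'' x a v + f'' x b v)) (at x)"
      by (rule has_derivative_transform_within_open[OF has_derivative_add[OF D D] assms(1,3)])
        (simp add: lin linear_add)
  qed
  moreover have "f'' x (c *\<^sub>R a) = (\<lambda>v. c * f'' x a v)" for c a
  proof (rule has_derivative_unique[OF D])
    show "((\<lambda>y. f' y (c *\<^sub>R a)) has_derivative (\<lambda>v. c * f'' x a v)) (at x)"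
      by (rule has_derivative_transform_within_open[OF has_derivative_mult_right[OF D] assms(1,3)])
        (simp add: lin linear_scale)
  qed
  ultimately show ?thesis
    by (intro linearI) simp_all
qed

lemma linear_eq_sum_Basis:
  fixes A :: "'a::euclidean_space \<Rightarrow> 'b::real_vector"
  assumes "linear A"
  shows "A x = (\<Sum>e\<in>Basis. (x \<bullet> e) *\<^sub>R A e)"
proof -
  have "A x = A (\<Sum>e\<in>Basis. (x \<bullet> e) *\<^sub>R e)"
    by (simp add: euclidean_representation)
  then show ?thesis
    by (simp add: linear_sum[OF assms] linear_scale[OF assms])
qed

lemma has_real_derivative_along_line:
  fixes f :: "'a::real_normed_vector \<Rightarrow> real"
  assumes "(f has_derivative f') (at (c + t *\<^sub>R v))"
  shows "((\<lambda>t. f (c + t *\<^sub>R v)) has_real_derivative f' v) (at t)"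
proof -
  have "((\<lambda>t. f (c + t *\<^sub>R v)) has_derivative (\<lambda>r. f' (r *\<^sub>R v))) (at t)"
    using assms by (auto intro!: derivative_eq_intros has_derivative_compose[of "\<lambda>t. c + t *\<^sub>R v" _ _ _ f])
  moreover have "(\<lambda>r. f' (r *\<^sub>R v)) = (\<lambda>r. f' v * r)"
    using has_derivative_linear[OF assms] by (simp add: linear_scale mult.commute)
  ultimately show ?thesis
    by (simp add: has_field_derivative_def)
qed

lemma second_difference_mvt:
  fixes f :: "'a::real_normed_vector \<Rightarrow> real"
  assumes s: "0 < s" and sub: "cball x (s * (norm a + norm b)) \<subseteq> S"
    and df: "\<And>y. y \<in> S \<Longrightarrow> (f has_derivative f' y) (at y)"
    and da: "\<And>y. y \<in> S \<Longrightarrow> ((\<lambda>y. f' y a) has_derivative fa y) (at y)"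
  obtains y where "dist y x \<le> s * (norm a + norm b)"
    "f (x + s *\<^sub>R a + s *\<^sub>R b) - f (x + s *\<^sub>R a) - f (x + s *\<^sub>R b) + f x = s * s * fa y b"
proof -
  have near: "dist (x + \<tau> *\<^sub>R a + \<sigma> *\<^sub>R b) x \<le> s * (norm a + norm b)"
    if "0 \<le> \<tau>" "\<tau> \<le> s" "0 \<le> \<sigma>" "\<sigma> \<le> s" for \<tau> \<sigma>
  proof -
    have "dist (x + \<tau> *\<^sub>R a + \<sigma> *\<^sub>R b) x = norm (\<tau> *\<^sub>R a + \<sigma> *\<^sub>R b)"
      by (simp add: dist_norm)
    also have "\<dots> \<le> \<tau> * norm a + \<sigma> * norm b"
      using that by (metis abs_of_nonneg norm_scaleR norm_triangle_ineq)
    also have "\<dots> \<le> s * (norm a + norm b)"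
      using that by (simp add: distrib_left add_mono mult_right_mono)
    finally show ?thesis .
  qed
  have inS: "x + \<tau> *\<^sub>R a + \<sigma> *\<^sub>R b \<in> S" if "0 \<le> \<tau>" "\<tau> \<le> s" "0 \<le> \<sigma>" "\<sigma> \<le> s" for \<tau> \<sigma>
    using near[OF that] sub by (auto simp: dist_commute)
  define \<phi> where "\<phi> \<tau> = f ((x + s *\<^sub>R b) + \<tau> *\<^sub>R a) - f (x + \<tau> *\<^sub>R a)" for \<tau>
  have "DERIV \<phi> \<tau> :> f' ((x + s *\<^sub>R b) + \<tau> *\<^sub>R a) a - f' (x + \<tau> *\<^sub>R a) a"
    if "0 \<le> \<tau>" "\<tau> \<le> s" for \<tau>
    unfolding \<phi>_def using inS[of \<tau> s] inS[of \<tau> 0] that s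
    by (intro DERIV_diff has_real_derivative_along_line df) (auto simp: algebra_simps)
  from MVT2[OF s this] obtain \<xi> where \<xi>: "0 < \<xi>" "\<xi> < s"
    and e1: "\<phi> s - \<phi> 0 = (s - 0) * (f' ((x + s *\<^sub>R b) + \<xi> *\<^sub>R a) a - f' (x + \<xi> *\<^sub>R a) a)"
    by auto
  have "DERIV (\<lambda>\<sigma>. f' ((x + \<xi> *\<^sub>R a) + \<sigma> *\<^sub>R b) a) \<sigma> :> fa ((x + \<xi> *\<^sub>R a) + \<sigma> *\<^sub>R b) b"
    if "0 \<le> \<sigma>" "\<sigma> \<le> s" for \<sigma>
    using inS[of \<xi> \<sigma>] that \<xi> by (intro has_real_derivative_along_line[where f="\<lambda>y. f' y a"] da) auto
  from MVT2[OF s this] obtain \<eta> where \<eta>: "0 < \<eta>" "\<eta> < s"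
    and e2: "f' ((x + \<xi> *\<^sub>R a) + s *\<^sub>R b) a - f' ((x + \<xi> *\<^sub>R a) + 0 *\<^sub>R b) a
       = (s - 0) * fa ((x + \<xi> *\<^sub>R a) + \<eta> *\<^sub>R b) b"
    by auto
  have "f (x + s *\<^sub>R a + s *\<^sub>R b) - f (x + s *\<^sub>R a) - f (x + s *\<^sub>R b) + f x = \<phi> s - \<phi> 0"
    unfolding \<phi>_def by (simp add: algebra_simps)
  with e1 e2 near[of \<xi> \<eta>] \<xi> \<eta> show ?thesis
    by (intro that[of "x + \<xi> *\<^sub>R a + \<eta> *\<^sub>R b"]) (auto simp: algebra_simps)
qed

lemma second_difference_tendsto:
  fixes f :: "'a::real_normed_vector \<Rightarrow> real"
  assumes S: "open S" "x \<in> S"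
    and df: "\<And>y. y \<in> S \<Longrightarrow> (f has_derivative f' y) (at y)"
    and da: "\<And>y. y \<in> S \<Longrightarrow> ((\<lambda>y. f' y a) has_derivative fa y) (at y)"
    and ca: "continuous (at x) (\<lambda>y. fa y b)"
  shows "((\<lambda>s. (f (x + s *\<^sub>R a + s *\<^sub>R b) - f (x + s *\<^sub>R a) - f (x + s *\<^sub>R b) + f x) / (s * s))
    \<longlongrightarrow> fa x b) (at_right 0)" (is "(?q \<longlongrightarrow> _) _")
proof (rule tendstoI)
  fix e :: real assume "0 < e"
  obtain \<delta> where \<delta>: "\<delta> > 0" "\<And>y. dist y x < \<delta> \<Longrightarrow> dist (fa y b) (fa x b) < e"
    using ca \<open>0 < e\<close> unfolding continuous_at_eps_delta by blast
  obtain r where r: "r > 0" "ball x r \<subseteq> S"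
    using S openE by blast
  define m where "m = min r \<delta> / (norm a + norm b + 1)"
  have N: "0 < norm a + norm b + 1"
    by (simp add: add_nonneg_pos)
  show "\<forall>\<^sub>F s in at_right 0. dist (?q s) (fa x b) < e"
  proof (rule eventually_at_rightI[of 0 m])
    show "0 < m"
      unfolding m_def using r(1) \<delta>(1) N by simp
    fix s assume s: "s \<in> {0<..<m}"
    have "s * (norm a + norm b) \<le> s * (norm a + norm b + 1)"
      using s by simp
    also have "\<dots> < min r \<delta>"
      using s N unfolding m_def by (simp add: pos_less_divide_eq)
    finally have small: "s * (norm a + norm b) < min r \<delta>" .
    then have "cball x (s * (norm a + norm b)) \<subseteq> S"
      using r(2) by (auto simp: subset_iff)
    moreover have "0 < s"
      using s by simp
    ultimately obtain y where y: "dist y x \<le> s * (norm a + norm b)"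
      and eq: "f (x + s *\<^sub>R a + s *\<^sub>R b) - f (x + s *\<^sub>R a) - f (x + s *\<^sub>R b) + f x = s * s * fa y b"
      using second_difference_mvt[OF _ _ df da] by blast
    have "dist (fa y b) (fa x b) < e"
      using y small by (intro \<delta>(2)) simp
    moreover have "?q s = fa y b"
      using eq \<open>0 < s\<close> by simp
    ultimately show "dist (?q s) (fa x b) < e"
      by simp
  qed
qed

lemma mixed_derivatives_eq:
  fixes f :: "'a::real_normed_vector \<Rightarrow> real"
  assumes S: "open S" "x \<in> S"
    and df: "\<And>y. y \<in> S \<Longrightarrow> (f has_derivative f' y) (at y)"
    and da: "\<And>y. y \<in> S \<Longrightarrow> ((\<lambda>y. f' y a) has_derivative fa y) (at y)"
    and db: "\<And>y. y \<in> S \<Longrightarrow> ((\<lambda>y. f' y b) has_derivative fb y) (at y)"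
    and ca: "continuous (at x) (\<lambda>y. fa y b)" and cb: "continuous (at x) (\<lambda>y. fb y a)"
  shows "fa x b = fb x a"
proof (rule tendsto_unique[OF trivial_limit_at_right_real])
  show "((\<lambda>s. (f (x + s *\<^sub>R a + s *\<^sub>R b) - f (x + s *\<^sub>R a) - f (x + s *\<^sub>R b) + f x) / (s * s))
      \<longlongrightarrow> fa x b) (at_right 0)"
    by (rule second_difference_tendsto[OF S df da ca])
  have "(\<lambda>s. (f (x + s *\<^sub>R b + s *\<^sub>R a) - f (x + s *\<^sub>R b) - f (x + s *\<^sub>R a) + f x) / (s * s))
      = (\<lambda>s. (f (x + s *\<^sub>R a + s *\<^sub>R b) - f (x + s *\<^sub>R a) - f (x + s *\<^sub>R b) + f x) / (s * s))"
    by (rule ext) (simp add: algebra_simps)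
  then show "((\<lambda>s. (f (x + s *\<^sub>R a + s *\<^sub>R b) - f (x + s *\<^sub>R a) - f (x + s *\<^sub>R b) + f x) / (s * s))
      \<longlongrightarrow> fb x a) (at_right 0)"
    using second_difference_tendsto[OF S df db cb] by simp
qed

lemma C2_on_second_derivative_symmetric:
  assumes "open S" "C2_on S f f' f''" "x \<in> S"
  shows "f'' x a b = f'' x b a"
proof -
  have D: "\<And>y. y \<in> S \<Longrightarrow> (f has_derivative f' y) (at y)"
    using C1_onD[OF C2_on_C1_on[OF assms(2)]] .
  have DD: "\<And>y. y \<in> S \<Longrightarrow> ((\<lambda>y. f' y c) has_derivative f'' y c) (at y)" for c
    using C1_onD[OF C2_on_C1_on_derivative[OF assms(2)]] .
  have cont: "continuous (at x) (\<lambda>y. f'' y c e)" for c e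
    using C1_on_continuous_derivative[OF C2_on_C1_on_derivative[OF assms(2)]] assms(1,3)
    by (simp add: continuous_on_eq_continuous_at)
  show ?thesis
    by (rule mixed_derivatives_eq[OF assms(1,3) D DD DD cont cont])
qed

lemma C1_on_derivative_along_affine:
  fixes f :: "'a::euclidean_space \<Rightarrow> real"
  assumes "open S" "C2_on S f f' f''" "linear A"
  shows "C1_on S (\<lambda>x. f' x (A x + b)) (\<lambda>x v. f'' x (A x + b) v + f' x (A v))"
proof -
  note A = linear_eq_sum_Basis[OF assms(3)]
  have "C1_on S (\<lambda>x. (\<Sum>e\<in>Basis. (x \<bullet> e) * f' x (A e)) + f' x b)
      (\<lambda>x v. (\<Sum>e\<in>Basis. (x \<bullet> e) * f'' x (A e) v + (v \<bullet> e) * f' x (A e)) + f'' x b v)"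
    by (intro C1_on_add C1_on_sum C1_on_mult C2_on_C1_on_derivative[OF assms(2)]
        C1_on_bounded_linear[of "\<lambda>x. x \<bullet> _", simplified] bounded_linear_inner_left)
  then show ?thesis
  proof (rule C1_on_cong[OF assms(1)])
    fix x assume x: "x \<in> S"
    have f': "linear (f' x)"
      using C1_on_linear_derivative[OF C2_on_C1_on[OF assms(2)] x] .
    have f'': "linear (\<lambda>a. f'' x a v)" for v
      using C2_on_second_derivative_linear[OF assms(1,2) x] .
    show "f' x (A x + b) = (\<Sum>e\<in>Basis. (x \<bullet> e) * f' x (A e)) + f' x b"
      by (subst A) (simp add: f' linear_add linear_sum linear_scale)
    show "(\<lambda>v. f'' x (A x + b) v + f' x (A v))
        = (\<lambda>v. (\<Sum>e\<in>Basis. (x \<bullet> e) * f'' x (A e) v + (v \<bullet> e) * f' x (A e)) + f'' x b v)"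
    proof
      fix v
      have "f'' x (A x + b) v = (\<Sum>e\<in>Basis. (x \<bullet> e) * f'' x (A e) v) + f'' x b v"
        by (subst A) (simp add: linear_add[OF f''] linear_sum[OF f''] linear_scale[OF f''])
      moreover have "f' x (A v) = (\<Sum>e\<in>Basis. (v \<bullet> e) * f' x (A e))"
        by (subst A) (simp add: f' linear_sum linear_scale)
      ultimately show "f'' x (A x + b) v + f' x (A v)
          = (\<Sum>e\<in>Basis. (x \<bullet> e) * f'' x (A e) v + (v \<bullet> e) * f' x (A e)) + f'' x b v"
        by (simp add: sum.distrib)
    qed
  qed
qed

lemma Ck_on_1_imp_C1_on: "Ck_on (Suc 0) S f \<Longrightarrow> C1_on S f (\<lambda>x. frechet_derivative f (at x))"
  by (simp add: C1_on_def frechet_derivative_works)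

lemma smooth_on_imp_C1_on: "smooth_on S f \<Longrightarrow> C1_on S f (\<lambda>x. frechet_derivative f (at x))"
  unfolding smooth_on_def by (blast intro: Ck_on_1_imp_C1_on)

lemma smooth_on_imp_C2_on:
  assumes "smooth_on S f"
  shows "C2_on S f (\<lambda>x. frechet_derivative f (at x))
    (\<lambda>x a. frechet_derivative (\<lambda>y. frechet_derivative f (at y) a) (at x))"
proof -
  have "Ck_on (Suc (Suc 0)) S f"
    using assms unfolding smooth_on_def by blast
  then have "Ck_on (Suc 0) S (\<lambda>x. frechet_derivative f (at x) a)" for a
    unfolding Ck_on.simps(2)[of "Suc 0"] by blast
  then show ?thesis
    unfolding C2_on_def using smooth_on_imp_C1_on[OF assms] Ck_on_1_imp_C1_on by blast
qed

lemma abs_abs_powr_mult_le: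
  fixes y :: real
  shows "\<bar>\<bar>y\<bar> powr (p - 2) * y\<bar> \<le> \<bar>y\<bar> powr (p - 1)"
proof (cases "y = 0")
  case False
  have "\<bar>y\<bar> powr (p - 1) = \<bar>y\<bar> powr (p - 2) * \<bar>y\<bar>"
    using powr_mult_base[of "\<bar>y\<bar>" "p - 2"] by (simp add: mult.commute)
  then show ?thesis
    by (simp add: abs_mult)
qed simp

lemma has_real_derivative_abs_powr_0:
  fixes p :: real
  assumes p: "1 < p"
  shows "((\<lambda>s. \<bar>s\<bar> powr p / p) has_real_derivative 0) (at 0)"
proof -
  have "((\<lambda>h. \<bar>h\<bar> powr p / p / h) \<longlongrightarrow> 0) (at 0)"
  proof (rule Lim_null_comparison)
    show "\<forall>\<^sub>F h in at 0. norm (\<bar>h\<bar> powr p / p / h) \<le> \<bar>h\<bar> powr (p - 1) / p"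
    proof (rule eventually_mono[OF eventually_neq_at_within[of 0]])
      fix h :: real assume "h \<noteq> 0"
      have "\<bar>h\<bar> powr p = \<bar>h\<bar> powr (p - 1) * \<bar>h\<bar>"
        using powr_mult_base[of "\<bar>h\<bar>" "p - 1"] by (simp add: mult.commute)
      then show "norm (\<bar>h\<bar> powr p / p / h) \<le> \<bar>h\<bar> powr (p - 1) / p"
        using p \<open>h \<noteq> 0\<close> by (simp add: abs_mult abs_divide)
    qed
    show "((\<lambda>h. \<bar>h\<bar> powr (p - 1) / p) \<longlongrightarrow> 0) (at 0)"
      using p by (intro tendsto_divide_zero tendsto_zero_powrI tendsto_rabs_zero tendsto_ident_at) auto
  qed
  then show ?thesis
    using p by (simp add: DERIV_def)
qed

lemma has_real_derivative_abs_powr: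
  fixes p :: real
  assumes p: "1 < p"
  shows "((\<lambda>s. \<bar>s\<bar> powr p / p) has_real_derivative \<bar>s\<bar> powr (p - 2) * s) (at s)"
proof -
  consider "s = 0" | "s > 0" | "s < 0" by linarith
  then show ?thesis
  proof cases
    case 1
    then show ?thesis
      using has_real_derivative_abs_powr_0[OF p] by simp
  next
    case 2
    have ev: "\<forall>\<^sub>F y in nhds s. \<bar>y\<bar> powr p / p = y powr p / p"
      using eventually_nhds_in_open[of "{0<..}" s] 2 by (simp add: eventually_mono)
    have "p * s powr (p - 1) / p = \<bar>s\<bar> powr (p - 2) * s"
      using powr_mult_base[of s "p - 2"] 2 p by (simp add: mult.commute)
    then have "((\<lambda>y. y powr p / p) has_real_derivative \<bar>s\<bar> powr (p - 2) * s) (at s)"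
      using 2 by (auto intro!: derivative_eq_intros)
    then show ?thesis
      using DERIV_cong_ev[OF refl ev refl] by simp
  next
    case 3
    have ev: "\<forall>\<^sub>F y in nhds s. \<bar>y\<bar> powr p / p = (- y) powr p / p"
      using eventually_nhds_in_open[of "{..<0}" s] 3 by (simp add: eventually_mono)
    have "p * (- s) powr (p - 1) * (- 1) / p = \<bar>s\<bar> powr (p - 2) * s"
      using powr_mult_base[of "- s" "p - 2"] 3 p by (simp add: mult.commute)
    then have "((\<lambda>y. (- y) powr p / p) has_real_derivative \<bar>s\<bar> powr (p - 2) * s) (at s)"
      using 3 by (auto intro!: derivative_eq_intros)
    then show ?thesis
      using DERIV_cong_ev[OF refl ev refl] by simp
  qed
qed

lemma continuous_abs_powr_mult:
  fixes p :: real
  assumes p: "1 < p"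
  shows "continuous_on UNIV (\<lambda>s::real. \<bar>s\<bar> powr (p - 2) * s)"
proof -
  have "isCont (\<lambda>s::real. \<bar>s\<bar> powr (p - 2) * s) s" for s
  proof (cases "s = 0")
    case True
    have "((\<lambda>s::real. \<bar>s\<bar> powr (p - 2) * s) \<longlongrightarrow> 0) (at 0)"
    proof (rule Lim_null_comparison)
      show "\<forall>\<^sub>F y in at 0. norm (\<bar>y::real\<bar> powr (p - 2) * y) \<le> \<bar>y\<bar> powr (p - 1)"
        using abs_abs_powr_mult_le by simp
      show "((\<lambda>y::real. \<bar>y\<bar> powr (p - 1)) \<longlongrightarrow> 0) (at 0)"
        using p by (intro tendsto_zero_powrI tendsto_rabs_zero tendsto_ident_at) auto
    qed
    then show ?thesis
      using True by (simp add: isCont_def)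
  next
    case False
    then show ?thesis
      by (intro continuous_intros) (auto intro!: tendsto_powr simp: isCont_def)
  qed
  then show ?thesis
    by (simp add: continuous_at_imp_continuous_on)
qed

lemma C1_on_abs_powr:
  assumes "C1_on S u u'" "1 < p"
  shows "C1_on S (\<lambda>x. \<bar>u x\<bar> powr p / p) (\<lambda>x v. \<bar>u x\<bar> powr (p - 2) * u x * u' x v)"
  by (rule C1_on_compose[OF assms(1) has_real_derivative_abs_powr[OF assms(2)]
        continuous_on_subset[OF continuous_abs_powr_mult[OF assms(2)] subset_UNIV]])

section \<open>Integration by parts along affine vector fields\<close>

lemma set_integrable_sum:
  fixes f :: "'i \<Rightarrow> 'a \<Rightarrow> real"
  assumes "\<And>i. i \<in> I \<Longrightarrow> set_integrable M A (f i)"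
  shows "set_integrable M A (\<lambda>x. \<Sum>i\<in>I. f i x)"
  using assms unfolding set_integrable_def by (simp add: sum_distrib_left)

lemma set_integral_sum:
  fixes f :: "'i \<Rightarrow> 'a \<Rightarrow> real"
  assumes "\<And>i. i \<in> I \<Longrightarrow> set_integrable M A (f i)"
  shows "(LINT x:A|M. \<Sum>i\<in>I. f i x) = (\<Sum>i\<in>I. LINT x:A|M. f i x)"
  using assms unfolding set_integrable_def set_lebesgue_integral_def
  by (simp add: sum_distrib_left)

lemma set_integrable_compact_support:
  fixes f :: "'a::euclidean_space \<Rightarrow> real"
  assumes "compact K" "K \<subseteq> S" "continuous_on S f" "\<And>x. x \<in> S \<Longrightarrow> x \<notin> K \<Longrightarrow> f x = 0"
  shows "set_integrable lborel S f"
proof -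
  have "integrable lborel (\<lambda>x. indicator K x *\<^sub>R f x)"
    using borel_integrable_compact[OF assms(1) continuous_on_subset[OF assms(3,2)]] .
  moreover have "(\<lambda>x. indicator K x *\<^sub>R f x) = (\<lambda>x. indicator S x *\<^sub>R f x)"
  proof
    fix x
    show "indicator K x *\<^sub>R f x = indicator S x *\<^sub>R f x"
      using assms(2,4) by (cases "x \<in> S") (auto simp: indicator_def)
  qed
  ultimately show ?thesis
    unfolding set_integrable_def by simp
qed

lemma set_integrable_mult_compact_support:
  fixes g w :: "'a::euclidean_space \<Rightarrow> real"
  assumes "compact K" "K \<subseteq> S" "continuous_on S g" "continuous_on S w" "{x. w x \<noteq> 0} \<subseteq> K"
  shows "set_integrable lborel S (\<lambda>x. g x * w x)"
  using assms by (intro set_integrable_compact_support continuous_on_mult) auto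

lemma integral_eq_set_integral:
  fixes f g :: "'a \<Rightarrow> real"
  assumes "\<And>x. x \<notin> S \<Longrightarrow> f x = 0" "\<And>x. x \<in> S \<Longrightarrow> f x = g x"
  shows "(\<integral>x. f x \<partial>M) = (LINT x:S|M. g x)"
  unfolding set_lebesgue_integral_def using assms
  by (intro Bochner_Integration.integral_cong) (auto simp: indicator_def)

lemma lborel_integral_translate:
  fixes F :: "'a::euclidean_space \<Rightarrow> real"
  assumes "integrable lborel F"
  shows "integrable lborel (\<lambda>x. F (x + c))" and "(\<integral>x. F (x + c) \<partial>lborel) = integral\<^sup>L lborel F"
proof -
  have F: "F \<in> borel_measurable borel"
    using borel_measurable_integrable[OF assms] by simp
  have "integrable (distr lborel borel ((+) c)) F"
    by (simp add: lborel_distr_plus assms)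
  then show "integrable lborel (\<lambda>x. F (x + c))"
    by (subst (asm) integrable_distr_eq) (auto simp: F add.commute)
  have "integral\<^sup>L lborel F = integral\<^sup>L (distr lborel borel ((+) c)) F"
    by (simp add: lborel_distr_plus)
  also have "\<dots> = (\<integral>x. F (x + c) \<partial>lborel)"
    by (subst integral_distr) (auto simp: F add.commute)
  finally show "(\<integral>x. F (x + c) \<partial>lborel) = integral\<^sup>L lborel F" ..
qed

lemma lborel_integral_difference_quotient:
  fixes F :: "'a::euclidean_space \<Rightarrow> real"
  assumes "integrable lborel F"
  shows "(\<integral>x. (F (x + h *\<^sub>R b) - F x) / h \<partial>lborel) = 0"
proof -
  have "(\<integral>x. (F (x + h *\<^sub>R b) - F x) / h \<partial>lborel)
      = ((\<integral>x. F (x + h *\<^sub>R b) \<partial>lborel) - integral\<^sup>L lborel F) / h"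
    using lborel_integral_translate(1)[OF assms] assms by simp
  then show ?thesis
    by (simp add: lborel_integral_translate(2)[OF assms])
qed

lemma difference_quotient_bound:
  fixes F :: "'a::real_normed_vector \<Rightarrow> real"
  assumes D: "\<And>x. (F has_derivative F' x) (at x)" and M: "\<And>x. \<bar>F' x b\<bar> \<le> M" and "0 < h"
  shows "\<bar>(F (x + h *\<^sub>R b) - F x) / h\<bar> \<le> M"
proof -
  obtain \<xi> where "F (x + h *\<^sub>R b) - F (x + 0 *\<^sub>R b) = (h - 0) * F' (x + \<xi> *\<^sub>R b) b"
    using MVT2[OF \<open>0 < h\<close>, of "\<lambda>s. F (x + s *\<^sub>R b)" "\<lambda>s. F' (x + s *\<^sub>R b) b"]
      has_real_derivative_along_line[OF D] by blast
  then show ?thesis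
    using M[of "x + \<xi> *\<^sub>R b"] \<open>0 < h\<close> by simp
qed

lemma difference_quotient_tendsto:
  fixes F :: "'a::real_normed_vector \<Rightarrow> real"
  assumes "(F has_derivative F') (at x)" "filterlim h (at 0) sequentially"
  shows "(\<lambda>n. (F (x + h n *\<^sub>R b) - F x) / h n) \<longlonglongrightarrow> F' b"
proof -
  have "((\<lambda>s. F (x + s *\<^sub>R b)) has_real_derivative F' b) (at 0)"
    using has_real_derivative_along_line[of F F' x 0 b] assms(1) by simp
  then have "((\<lambda>s. (F (x + s *\<^sub>R b) - F x) / s) \<longlongrightarrow> F' b) (at 0)"
    unfolding DERIV_def by simp
  from filterlim_compose[OF this assms(2)] show ?thesis
    by simp
qed

lemma difference_quotient_support:
  fixes F :: "'a::real_normed_vector \<Rightarrow> real"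
  assumes "{x. F x \<noteq> 0} \<subseteq> K" "0 < h" "h \<le> 1" "(F (x + h *\<^sub>R b) - F x) / h \<noteq> 0"
  shows "x \<in> (\<lambda>z. fst z - snd z *\<^sub>R b) ` (K \<times> {0..1})"
proof -
  have "F x \<noteq> 0 \<or> F (x + h *\<^sub>R b) \<noteq> 0"
    using assms(4) by auto
  then consider "x \<in> K" | "x + h *\<^sub>R b \<in> K"
    using assms(1) by blast
  then show ?thesis
  proof cases
    case 1
    then show ?thesis
      by (intro image_eqI[where x="(x, 0)"]) auto
  next
    case 2
    then show ?thesis
      using assms(2,3) by (intro image_eqI[where x="(x + h *\<^sub>R b, h)"]) auto
  qed
qed

lemma derivative_bounded_compact_support:
  fixes F :: "'a::real_normed_vector \<Rightarrow> real"
  assumes K: "compact K" and F0: "{x. F x \<noteq> 0} \<subseteq> K"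
    and D: "\<And>x. (F has_derivative F' x) (at x)" and cont: "continuous_on UNIV (\<lambda>x. F' x b)"
  obtains M where "\<And>x. \<bar>F' x b\<bar> \<le> M"
proof -
  have F'0: "F' x b = 0" if "x \<notin> K" for x
    using has_derivative_eq_0_outside[OF D compact_imp_closed[OF K] F0 that] by simp
  have "bounded ((\<lambda>x. F' x b) ` K)"
    using K continuous_on_subset[OF cont] by (intro compact_imp_bounded compact_continuous_image) auto
  then obtain k where k: "\<forall>y\<in>(\<lambda>x. F' x b) ` K. \<bar>y\<bar> \<le> k"
    by (auto simp: bounded_real)
  have "\<bar>F' x b\<bar> \<le> max k 0" for x
    using k F'0 by (cases "x \<in> K") auto
  then show ?thesis
    by (rule that)
qed

text \<open>The integrals of the difference quotients vanish by translation invariance, and they converge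
  to the integral of the derivative by dominated convergence.\<close>
lemma integral_derivative_eq_0:
  fixes F :: "'a::euclidean_space \<Rightarrow> real"
  assumes K: "compact K" and F0: "{x. F x \<noteq> 0} \<subseteq> K"
    and D: "\<And>x. (F has_derivative F' x) (at x)" and cont: "continuous_on UNIV (\<lambda>x. F' x b)"
  shows "(\<integral>x. F' x b \<partial>lborel) = 0"
proof -
  obtain M where M: "\<And>x. \<bar>F' x b\<bar> \<le> M"
    using derivative_bounded_compact_support[OF K F0 D cont] by blast
  have Fcont: "continuous_on UNIV F"
    using D by (meson continuous_at_imp_continuous_on has_derivative_continuous)
  have intF: "integrable lborel F"
    using set_integrable_compact_support[OF K _ Fcont] F0 by (auto simp: set_integrable_def)
  define h where "h n = 1 / real (Suc n)" for n
  have h: "0 < h n" "h n \<le> 1" for n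
    unfolding h_def by auto
  have h0: "filterlim h (at 0) sequentially"
    unfolding h_def filterlim_at
    by (auto intro!: LIMSEQ_Suc[OF lim_inverse_n'] simp: eventually_sequentially simp del: of_nat_Suc)
  define q where "q n x = (F (x + h n *\<^sub>R b) - F x) / h n" for n x
  define K' where "K' = (\<lambda>z. fst z - snd z *\<^sub>R b) ` (K \<times> {0..1})"
  have "compact K'"
    unfolding K'_def using K by (intro compact_continuous_image compact_Times continuous_intros) auto
  have "(\<lambda>n. \<integral>x. q n x \<partial>lborel) \<longlonglongrightarrow> (\<integral>x. F' x b \<partial>lborel)"
  proof (rule integral_dominated_convergence)
    show "(\<lambda>x. F' x b) \<in> borel_measurable lborel"
      using cont by (simp add: borel_measurable_continuous_onI)
    have "continuous_on UNIV (q n)" for n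
      unfolding q_def using h(1)[of n] by (intro continuous_intros continuous_on_compose2[OF Fcont]) auto
    then show "q n \<in> borel_measurable lborel" for n
      by (simp add: borel_measurable_continuous_onI)
    show "integrable lborel (\<lambda>x. M * indicator K' x)"
      using \<open>compact K'\<close> emeasure_compact_finite[of K']
      by (intro integrable_mult_right integrable_real_indicator) (auto simp: compact_imp_closed)
    show "AE x in lborel. (\<lambda>n. q n x) \<longlonglongrightarrow> F' x b"
      unfolding q_def using difference_quotient_tendsto[OF D h0] by simp
    show "AE x in lborel. norm (q n x) \<le> M * indicator K' x" for n
    proof (rule AE_I2)
      fix x
      have "\<bar>q n x\<bar> \<le> M"
        unfolding q_def by (rule difference_quotient_bound[OF D M h(1)])
      moreover have "x \<in> K'" if "q n x \<noteq> 0"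
        using difference_quotient_support[OF F0 h that[unfolded q_def]] unfolding K'_def .
      ultimately show "norm (q n x) \<le> M * indicator K' x"
        by (cases "x \<in> K'") auto
    qed
  qed
  moreover have "(\<integral>x. q n x \<partial>lborel) = 0" for n
    unfolding q_def by (rule lborel_integral_difference_quotient[OF intF])
  ultimately show ?thesis
    by (simp add: LIMSEQ_const_iff)
qed

lemma set_integral_derivative_eq_0:
  fixes F :: "'a::euclidean_space \<Rightarrow> real"
  assumes S: "open S" "compact K" "K \<subseteq> S" and F: "C1_on S F F'" "{x. F x \<noteq> 0} \<subseteq> K"
  shows "(LINT x:S|lborel. F' x b) = 0"
proof -
  define G where "G x = (if x \<in> S then F' x else (\<lambda>_. 0))" for x
  have closedK: "closed K"
    using S(2) by (rule compact_imp_closed)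
  have Gder: "(F has_derivative G x) (at x)" for x
  proof (cases "x \<in> S")
    case False
    have "((\<lambda>_. 0) has_derivative (\<lambda>_. 0)) (at x)"
      by simp
    then have "(F has_derivative (\<lambda>_. 0)) (at x)"
      by (rule has_derivative_transform_within_open[where s="- K"]) (use False S(3) closedK F(2) in auto)
    then show ?thesis
      using False unfolding G_def by simp
  qed (use C1_onD[OF F(1)] G_def in auto)
  have Gcont: "continuous_on UNIV (\<lambda>x. G x b)"
  proof -
    have "continuous_on (S \<union> - K) (\<lambda>x. G x b)"
    proof (rule continuous_on_open_Un)
      show "continuous_on S (\<lambda>x. G x b)"
        using C1_on_continuous_derivative[OF F(1)] by (rule continuous_on_eq) (simp add: G_def)
      show "continuous_on (- K) (\<lambda>x. G x b)"
        using C1_on_derivative_eq_0[OF F(1) closedK F(2)]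
        by (intro continuous_on_eq[OF continuous_on_const]) (auto simp: G_def)
    qed (use S closedK in auto)
    moreover have "S \<union> - K = UNIV"
      using S(3) by auto
    ultimately show ?thesis
      by simp
  qed
  have "(\<integral>x. G x b \<partial>lborel) = 0"
    using integral_derivative_eq_0[OF S(2) F(2) Gder Gcont] .
  moreover have "indicator S x *\<^sub>R F' x b = G x b" for x
    by (simp add: G_def indicator_def)
  ultimately show ?thesis
    by (simp add: set_lebesgue_integral_def)
qed

lemma set_integral_derivative_along_affine:
  fixes F :: "'a::euclidean_space \<Rightarrow> real"
  assumes S: "open S" "compact K" "K \<subseteq> S" and F: "C1_on S F F'" "{x. F x \<noteq> 0} \<subseteq> K"
    and A: "linear A"
  shows "(LINT x:S|lborel. F' x (A x + b)) = - (\<Sum>e\<in>Basis. A e \<bullet> e) * (LINT x:S|lborel. F x)"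
proof -
  have F'0: "F' x v = 0" if "x \<in> S" "x \<notin> K" for x v
    using C1_on_derivative_eq_0[OF F(1) compact_imp_closed[OF S(2)] F(2) that] .
  have int': "set_integrable lborel S (\<lambda>x. g x * F' x v)" if "continuous_on S g" for g v
    using continuous_on_mult[OF that C1_on_continuous_derivative[OF F(1)]] F'0
    by (intro set_integrable_compact_support[OF S(2,3)]) auto
  have int: "set_integrable lborel S (\<lambda>x. g x * F x)" if "continuous_on S g" for g
    using continuous_on_mult[OF that C1_on_imp_continuous_on[OF F(1)]] F(2)
    by (intro set_integrable_compact_support[OF S(2,3)]) auto
  have inner: "continuous_on S (\<lambda>x. x \<bullet> e)" for e
    by (intro continuous_intros)
  have coord: "(LINT x:S|lborel. (x \<bullet> e) * F' x (A e)) = - (A e \<bullet> e) * (LINT x:S|lborel. F x)" for e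
  proof -
    have "C1_on S (\<lambda>x. (x \<bullet> e) * F x) (\<lambda>x v. (x \<bullet> e) * F' x v + (v \<bullet> e) * F x)"
      using C1_on_mult[OF C1_on_bounded_linear[OF bounded_linear_inner_left] F(1)] by simp
    then have "(LINT x:S|lborel. (x \<bullet> e) * F' x (A e) + (A e \<bullet> e) * F x) = 0"
      by (rule set_integral_derivative_eq_0[OF S]) (use F(2) in auto)
    then show ?thesis
      using int'[OF inner] int[OF continuous_on_const] by (simp add: set_integral_add)
  qed
  have "F' x (A x + b) = (\<Sum>e\<in>Basis. (x \<bullet> e) * F' x (A e)) + F' x b" if "x \<in> S" for x
    using C1_on_linear_derivative[OF F(1) that]
    by (subst linear_eq_sum_Basis[OF A]) (simp add: linear_add linear_sum linear_scale)
  then have "(LINT x:S|lborel. F' x (A x + b))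
      = (LINT x:S|lborel. (\<Sum>e\<in>Basis. (x \<bullet> e) * F' x (A e)) + F' x b)"
    using S(1) by (intro set_lebesgue_integral_cong) auto
  also have "\<dots> = (\<Sum>e\<in>Basis. LINT x:S|lborel. (x \<bullet> e) * F' x (A e)) + (LINT x:S|lborel. F' x b)"
    using int'[OF inner] int'[OF continuous_on_const, of 1]
    by (simp add: set_integral_add set_integrable_sum set_integral_sum)
  also have "\<dots> = - (\<Sum>e\<in>Basis. A e \<bullet> e) * (LINT x:S|lborel. F x)"
    by (simp add: coord set_integral_derivative_eq_0[OF S F] sum_distrib_right sum_negf)
  finally show ?thesis .
qed

lemma set_integral_by_parts_affine:
  fixes f g :: "'a::euclidean_space \<Rightarrow> real"
  assumes S: "open S" "compact K" "K \<subseteq> S" and f: "C1_on S f f'"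
    and g: "C1_on S g g'" "{x. g x \<noteq> 0} \<subseteq> K" and A: "linear A"
  shows "set_integrable lborel S (\<lambda>x. f x * g' x (A x + b))"
    and "set_integrable lborel S (\<lambda>x. g x * f' x (A x + b))"
    and "(LINT x:S|lborel. f x * g' x (A x + b))
      = - (LINT x:S|lborel. g x * f' x (A x + b)) - (\<Sum>e\<in>Basis. A e \<bullet> e) * (LINT x:S|lborel. f x * g x)"
proof -
  have V: "continuous_on S (\<lambda>x. A x + b)"
    using linear_continuous_on[OF linear_conv_bounded_linear[THEN iffD1, OF A]] by (intro continuous_intros)
  have g'0: "g' x v = 0" if "x \<in> S" "x \<notin> K" for x v
    using C1_on_derivative_eq_0[OF g(1) compact_imp_closed[OF S(2)] g(2) that] .
  show int1: "set_integrable lborel S (\<lambda>x. f x * g' x (A x + b))"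
    using continuous_on_mult[OF C1_on_imp_continuous_on[OF f] C1_on_continuous_along[OF g(1) V]] g'0
    by (intro set_integrable_compact_support[OF S(2,3)]) auto
  show int2: "set_integrable lborel S (\<lambda>x. g x * f' x (A x + b))"
    using continuous_on_mult[OF C1_on_imp_continuous_on[OF g(1)] C1_on_continuous_along[OF f V]] g(2)
    by (intro set_integrable_compact_support[OF S(2,3)]) auto
  have "(LINT x:S|lborel. f x * g' x (A x + b) + f' x (A x + b) * g x)
      = - (\<Sum>e\<in>Basis. A e \<bullet> e) * (LINT x:S|lborel. f x * g x)"
    by (rule set_integral_derivative_along_affine[OF S C1_on_mult[OF f g(1)] _ A]) (use g(2) in auto)
  then show "(LINT x:S|lborel. f x * g' x (A x + b))
      = - (LINT x:S|lborel. g x * f' x (A x + b)) - (\<Sum>e\<in>Basis. A e \<bullet> e) * (LINT x:S|lborel. f x * g x)"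
    using int1 int2 by (simp add: set_integral_add mult.commute)
qed

lemma set_integral_by_parts_powr_weight:
  fixes d w :: "'a::euclidean_space \<Rightarrow> real"
  assumes S: "open S" "compact K" "K \<subseteq> S" and d: "C1_on S d d'" "\<forall>x\<in>S. 0 < d x"
    and w: "C1_on S w w'" "{x. w x \<noteq> 0} \<subseteq> K" and A: "linear A"
  shows "set_integrable lborel S (\<lambda>x. d x powr (- a) * w' x (A x))"
    and "(LINT x:S|lborel. d x powr (- a) * w' x (A x))
      = a * (LINT x:S|lborel. d x powr (- a - 1) * d' x (A x) * w x)
        - (\<Sum>e\<in>Basis. A e \<bullet> e) * (LINT x:S|lborel. d x powr (- a) * w x)"
proof -
  note P = set_integral_by_parts_affine[OF S C1_on_powr[OF d, of "- a"] w A, of 0]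
  show "set_integrable lborel S (\<lambda>x. d x powr (- a) * w' x (A x))"
    using P(1) by simp
  have eq1: "(LINT x:S|lborel. d x powr (- a) * w' x (A x))
      = - (LINT x:S|lborel. w x * (- a * d x powr (- a - 1) * d' x (A x)))
        - (\<Sum>e\<in>Basis. A e \<bullet> e) * (LINT x:S|lborel. d x powr (- a) * w x)"
    using P(3) by simp
  have "(LINT x:S|lborel. w x * (- a * d x powr (- a - 1) * d' x (A x)))
      = (LINT x:S|lborel. - a * (d x powr (- a - 1) * d' x (A x) * w x))"
    by (simp add: mult_ac)
  also have "\<dots> = - a * (LINT x:S|lborel. d x powr (- a - 1) * d' x (A x) * w x)"
    by (rule set_integral_mult_right)
  finally have eq2: "(LINT x:S|lborel. w x * (- a * d x powr (- a - 1) * d' x (A x)))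
      = - a * (LINT x:S|lborel. d x powr (- a - 1) * d' x (A x) * w x)" .
  show "(LINT x:S|lborel. d x powr (- a) * w' x (A x))
      = a * (LINT x:S|lborel. d x powr (- a - 1) * d' x (A x) * w x)
        - (\<Sum>e\<in>Basis. A e \<bullet> e) * (LINT x:S|lborel. d x powr (- a) * w x)"
    unfolding eq1 eq2 by simp
qed

text \<open>The second derivatives of d cancel by their symmetry, leaving d' applied to the Lie bracket
  of the two affine fields.\<close>
lemma set_integral_bracket_by_parts:
  fixes m d w :: "'a::euclidean_space \<Rightarrow> real"
  assumes S: "open S" "compact K" "K \<subseteq> S" and m: "C1_on S m m'" and d: "C2_on S d d' d''"
    and w: "C1_on S w w'" "{x. w x \<noteq> 0} \<subseteq> K"
    and A: "linear A" "(\<Sum>e\<in>Basis. A e \<bullet> e) = 0" and B: "linear B" "(\<Sum>e\<in>Basis. B e \<bullet> e) = 0"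
  shows "(LINT x:S|lborel. m x * (w' x (B x + b) * d' x (A x + a) - w' x (A x + a) * d' x (B x + b)))
    = (LINT x:S|lborel. w x * (m' x (A x + a) * d' x (B x + b) - m' x (B x + b) * d' x (A x + a)
        - m x * d' x (A (B x + b) - B (A x + a))))"
proof -
  note dA = C1_on_derivative_along_affine[OF S(1) d A(1), of a]
  note dB = C1_on_derivative_along_affine[OF S(1) d B(1), of b]
  note PA = set_integral_by_parts_affine[OF S C1_on_mult[OF m dA] w B(1), of b]
  note PB = set_integral_by_parts_affine[OF S C1_on_mult[OF m dB] w A(1), of a]
  have "(LINT x:S|lborel. m x * (w' x (B x + b) * d' x (A x + a) - w' x (A x + a) * d' x (B x + b)))
      = (LINT x:S|lborel. m x * d' x (A x + a) * w' x (B x + b) - m x * d' x (B x + b) * w' x (A x + a))"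
    by (simp add: algebra_simps)
  also have "\<dots> = (LINT x:S|lborel. m x * d' x (A x + a) * w' x (B x + b))
      - (LINT x:S|lborel. m x * d' x (B x + b) * w' x (A x + a))"
    using PA(1) PB(1) by (simp add: set_integral_diff)
  also have "\<dots> = (LINT x:S|lborel. w x * (m x * (d'' x (B x + b) (A x + a) + d' x (B (A x + a)))
        + m' x (A x + a) * d' x (B x + b)))
      - (LINT x:S|lborel. w x * (m x * (d'' x (A x + a) (B x + b) + d' x (A (B x + b)))
        + m' x (B x + b) * d' x (A x + a)))"
    using PA(3) PB(3) by (simp add: A(2) B(2))
  also have "\<dots> = (LINT x:S|lborel. w x * (m x * (d'' x (B x + b) (A x + a) + d' x (B (A x + a)))
        + m' x (A x + a) * d' x (B x + b))
      - w x * (m x * (d'' x (A x + a) (B x + b) + d' x (A (B x + b)))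
        + m' x (B x + b) * d' x (A x + a)))"
    using PA(2) PB(2) by (simp add: set_integral_diff)
  also have "\<dots> = (LINT x:S|lborel. w x * (m' x (A x + a) * d' x (B x + b) - m' x (B x + b) * d' x (A x + a)
        - m x * d' x (A (B x + b) - B (A x + a))))"
  proof (intro set_lebesgue_integral_cong allI impI)
    show "S \<in> sets lborel"
      using S(1) by simp
    fix x assume "x \<in> S"
    have sym: "d'' x (B x + b) (A x + a) = d'' x (A x + a) (B x + b)"
      by (rule C2_on_second_derivative_symmetric[OF S(1) d \<open>x \<in> S\<close>])
    have lin: "d' x (A (B x + b) - B (A x + a)) = d' x (A (B x + b)) - d' x (B (A x + a))"
      by (rule linear_diff[OF C1_on_linear_derivative[OF C2_on_C1_on[OF d] \<open>x \<in> S\<close>]])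
    show "w x * (m x * (d'' x (B x + b) (A x + a) + d' x (B (A x + a)))
        + m' x (A x + a) * d' x (B x + b))
      - w x * (m x * (d'' x (A x + a) (B x + b) + d' x (A (B x + b)))
        + m' x (B x + b) * d' x (A x + a))
      = w x * (m' x (A x + a) * d' x (B x + b) - m' x (B x + b) * d' x (A x + a)
        - m x * d' x (A (B x + b) - B (A x + a)))"
      unfolding sym lin by (simp add: algebra_simps)
  qed
  finally show ?thesis .
qed

section \<open>The horizontal vector fields\<close>

lemma sum_Basis_prod:
  fixes f :: "'a::euclidean_space \<times> 'b::euclidean_space \<Rightarrow> 'c::comm_monoid_add"
  shows "(\<Sum>e\<in>Basis. f e) = (\<Sum>u\<in>Basis. f (u, 0)) + (\<Sum>v\<in>Basis. f (0, v))"
proof -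
  have "inj_on (\<lambda>u. (u::'a, 0::'b)) Basis" "inj_on (\<lambda>v. (0::'a, v::'b)) Basis"
    by (auto intro!: inj_onI)
  then show ?thesis
    unfolding Basis_prod_def by (subst sum.union_disjoint) (auto simp: sum.reindex)
qed

definition hfield_lin :: "'N \<Rightarrow> 'n \<Rightarrow> 2 \<Rightarrow> ('n::finite,'N::finite) heis \<Rightarrow> ('n,'N) heis" where
  "hfield_lin j i k x = hfield j i k x - hfield j i k 0"

lemma hfield_eq_hfield_lin: "hfield j i k x = hfield_lin j i k x + (axis j (axis i (axis k 1)), 0)"
  by (simp add: hfield_lin_def hfield_def vec_eq_iff axis_def)

lemma hfield_lin_eq:
  "hfield_lin j i k x = (0, \<chi> j'. if j' = j then (if k = 1 then 2 * (fst x $ j $ i $ 2) else - 2 * (fst x $ j $ i $ 1)) else 0)"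
  by (auto simp: hfield_lin_def hfield_def vec_eq_iff)

lemma snd_hfield_nth:
  "snd (hfield j i 1 x) $ j = 2 * fst x $ j $ i $ 2" "snd (hfield j i 2 x) $ j = - 2 * fst x $ j $ i $ 1"
  by (simp_all add: hfield_def)

lemma linear_hfield_lin: "linear (hfield_lin j i k)"
  by (rule linearI) (auto simp: hfield_lin_eq vec_eq_iff algebra_simps)

lemma trace_hfield_lin: "(\<Sum>e\<in>Basis. hfield_lin j i k e \<bullet> e) = 0"
proof -
  have "hfield_lin j i k (u, 0) \<bullet> (u, 0) = 0" for u
    by (simp add: hfield_lin_eq)
  moreover have "hfield_lin j i k (0, v) = 0" for v
    by (simp add: hfield_lin_eq vec_eq_iff prod_eq_iff)
  ultimately show ?thesis
    by (simp add: sum_Basis_prod)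
qed

lemma hfield_lin_bracket: "hfield_lin j i 1 (hfield j i 2 x) - hfield_lin j i 2 (hfield j i 1 x) = 4 *\<^sub>R (0, axis j 1)"
  by (auto simp: hfield_lin_eq hfield_def vec_eq_iff axis_def)

lemma continuous_on_hfield: "continuous_on S (hfield j i k)"
proof -
  have "continuous_on S (\<lambda>x. hfield_lin j i k x + (axis j (axis i (axis k 1)), 0))"
    using linear_continuous_on[OF linear_conv_bounded_linear[THEN iffD1, OF linear_hfield_lin]]
    by (intro continuous_intros) (auto intro: continuous_on_subset)
  then show ?thesis
    by (simp add: hfield_eq_hfield_lin[abs_def])
qed

lemma linear_euler_field: "linear (\<lambda>x::('n::finite,'N::finite) heis. (fst x, 2 *\<^sub>R snd x))"
  by (rule linearI) (auto simp: algebra_simps)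

lemma linear_fst_field: "linear (\<lambda>x::('n::finite,'N::finite) heis. (fst x, 0))"
  by (rule linearI) auto

lemma trace_euler_field:
  "(\<Sum>e\<in>Basis. (fst e, 2 *\<^sub>R snd e) \<bullet> (e :: ('n::finite,'N::finite) heis))
    = 2 * real CARD('N) * (real CARD('n) + 1)"
  by (simp add: sum_Basis_prod inner_Pair algebra_simps)

lemma trace_fst_field:
  "(\<Sum>e\<in>Basis. (fst e, 0) \<bullet> (e :: ('n::finite,'N::finite) heis)) = 2 * real CARD('N) * real CARD('n)"
  by (simp add: sum_Basis_prod inner_Pair)

lemma sum_axis: "(\<Sum>k\<in>A. axis i (f k)) = axis i (\<Sum>k\<in>A. f k :: 'a::comm_monoid_add)"
  by (induct A rule: infinite_finite_induct) (auto simp: vec_eq_iff axis_def)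

lemma sum_axis_nth: "(\<Sum>i\<in>UNIV. axis i (x $ i)) = (x :: 'a::comm_monoid_add ^ 'n::finite)"
  by (simp add: vec_eq_iff axis_def if_distrib sum.delta cong: if_cong)

lemma scaleR_axis: "c *\<^sub>R axis i v = axis i (c *\<^sub>R v)"
  by (simp add: vec_eq_iff axis_def)

lemma fst_hfield: "fst (hfield j i k x) = axis j (axis i (axis k 1))"
  by (simp add: hfield_def vec_eq_iff axis_def)

lemma sum_hfield_fst:
  "(\<Sum>j\<in>UNIV. \<Sum>i\<in>UNIV. \<Sum>k\<in>UNIV. (fst x $ j $ i $ k) *\<^sub>R hfield j i k x) = (fst x, 0)"
proof (rule prod_eqI)
  show "fst (\<Sum>j\<in>UNIV. \<Sum>i\<in>UNIV. \<Sum>k\<in>UNIV. (fst x $ j $ i $ k) *\<^sub>R hfield j i k x) = fst (fst x, 0)"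
    by (simp add: fst_sum fst_hfield scaleR_axis sum_axis sum_axis_nth)
  show "snd (\<Sum>j\<in>UNIV. \<Sum>i\<in>UNIV. \<Sum>k\<in>UNIV. (fst x $ j $ i $ k) *\<^sub>R hfield j i k x) = snd (fst x, 0)"
    by (simp add: vec_eq_iff hfield_def snd_sum sum_2 if_distrib sum.delta cong: if_cong)
qed

lemma sum_hfield_fst_linear:
  assumes "linear L"
  shows "(\<Sum>j\<in>UNIV. \<Sum>i\<in>UNIV. \<Sum>k\<in>UNIV. fst x $ j $ i $ k * L (hfield j i k x)) = L (fst x, 0)"
  using arg_cong[OF sum_hfield_fst, of L] by (simp add: linear_sum[OF assms] linear_scale[OF assms])

lemma sum_snd_linear:
  fixes x :: "('n::finite,'N::finite) heis" and L :: "('n,'N) heis \<Rightarrow> real"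
  assumes "linear L"
  shows "(\<Sum>j\<in>UNIV. snd x $ j * L (0, axis j 1)) = L (0, snd x)"
proof -
  have eq: "(0, snd x) = (\<Sum>j\<in>UNIV. (snd x $ j) *\<^sub>R (0, axis j 1) :: ('n,'N) heis)"
    by (simp add: prod_eq_iff fst_sum snd_sum vec_eq_iff axis_def if_distrib sum.delta cong: if_cong)
  show ?thesis
    by (subst eq) (simp only: linear_sum[OF assms] linear_scale[OF assms] real_scaleR_def)
qed

lemma sum_hfield_bracket_terms:
  fixes x :: "('n::finite,'N::finite) heis"
  assumes "linear L"
  shows "(\<Sum>j\<in>UNIV. \<Sum>i\<in>UNIV. 2 * (fst x $ j $ i $ 1 * L (hfield j i 1 x) + fst x $ j $ i $ 2 * L (hfield j i 2 x))
      - 4 * (snd x $ j * L (0, axis j 1)))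
    = 2 * L (fst x, 0) - 4 * real CARD('n) * L (0, snd x)"
proof -
  define A where "A j i = fst x $ j $ i $ 1 * L (hfield j i 1 x) + fst x $ j $ i $ 2 * L (hfield j i 2 x)" for j i
  define B where "B j = snd x $ j * L (0, axis j 1)" for j
  have "(\<Sum>j\<in>UNIV. \<Sum>i\<in>UNIV. A j i) = L (fst x, 0)"
    using sum_hfield_fst_linear[OF assms, of x] unfolding A_def by (simp add: sum_2)
  moreover have "(\<Sum>j\<in>UNIV. \<Sum>i\<in>(UNIV::'n set). B j) = real CARD('n) * L (0, snd x)"
    using sum_snd_linear[OF assms, of x] unfolding B_def by (simp flip: sum_distrib_left)
  moreover have "(\<Sum>j\<in>UNIV. \<Sum>i\<in>UNIV. 2 * A j i - 4 * B j)
      = 2 * (\<Sum>j\<in>UNIV. \<Sum>i\<in>UNIV. A j i) - 4 * (\<Sum>j\<in>UNIV. \<Sum>i\<in>(UNIV::'n set). B j)"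
    by (simp add: sum_subtractf sum_distrib_left mult_ac)
  ultimately show ?thesis
    unfolding A_def B_def by simp
qed

lemma inner_hperp:
  "(\<chi> j i k. L (hfield j i k x)) \<bullet> hperp j d x
    = (\<Sum>i\<in>UNIV. L (hfield j i 2 x) * frechet_derivative d (at x) (hfield j i 1 x)
        - L (hfield j i 1 x) * frechet_derivative d (at x) (hfield j i 2 x))"
proof -
  have sum_if: "(\<Sum>i\<in>UNIV. if P then f i else 0) = (if P then \<Sum>i\<in>UNIV. f i else (0::real))"
    for P and f :: "'n \<Rightarrow> real"
    by simp
  show ?thesis
    by (simp add: inner_vec_def hperp_def hgrad_def sum_2 if_distrib sum_if sum.delta' cong: if_cong)
qed

lemma hgrad_inner_Zd:
  fixes d :: "('n::finite,'N::finite) heis \<Rightarrow> real"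
  assumes L: "linear L" and d: "0 < d x"
  shows "d x powr (1 - p * \<theta>) * ((\<chi> j i k. L (hfield j i k x)) \<bullet> Zd p \<theta> d x)
    = (real CARD('n) + 1) / real CARD('n) * (d x powr (- (p * \<theta>)) * L (fst x, 0))
      - p * \<theta> / (2 * real CARD('n)) * (\<Sum>j\<in>UNIV. \<Sum>i\<in>UNIV. d x powr (- (p * \<theta>) - 1) * snd x $ j
          * (L (hfield j i 2 x) * frechet_derivative d (at x) (hfield j i 1 x)
             - L (hfield j i 1 x) * frechet_derivative d (at x) (hfield j i 2 x)))"
    (is "_ = ?c1 * _ - ?c2 * (\<Sum>j\<in>UNIV. \<Sum>i\<in>UNIV. ?h * snd x $ j * ?B j i)")
proof -
  have fst_part: "(\<chi> j i k. L (hfield j i k x)) \<bullet> fst x = L (fst x, 0)"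
    using sum_hfield_fst_linear[OF L, of x] by (simp add: inner_vec_def mult.commute)
  have inner: "(\<chi> j i k. L (hfield j i k x)) \<bullet> Zd p \<theta> d x
      = ?c1 / d x * L (fst x, 0) - ?c2 / (d x)\<^sup>2 * (\<Sum>j\<in>UNIV. snd x $ j * (\<Sum>i\<in>UNIV. ?B j i))"
    unfolding Zd_def by (simp add: inner_diff_right inner_sum_right fst_part inner_hperp)
  have pow: "d x powr (1 - p * \<theta>) = d x * d x * ?h" "d x powr (- (p * \<theta>)) = d x * ?h"
    using powr_mult_base[of "d x" "- (p * \<theta>) - 1"] powr_mult_base[of "d x" "- (p * \<theta>)"] d
    by (simp_all add: mult.assoc)
  have sums: "(\<Sum>j\<in>UNIV. \<Sum>i\<in>UNIV. ?h * snd x $ j * ?B j i) = ?h * (\<Sum>j\<in>UNIV. snd x $ j * (\<Sum>i\<in>UNIV. ?B j i))"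
    by (simp add: sum_distrib_left mult.assoc)
  have "D * D * h * (c1 / D * l - c2 / D\<^sup>2 * s) = c1 * (D * h * l) - c2 * (h * s)" if "0 < D" for D h c1 c2 l s :: real
    using that by (simp add: field_simps power2_eq_square)
  then show ?thesis
    unfolding inner pow sums using d by blast
qed

lemma homogeneous_norm_pos:
  "homogeneous_norm d \<Longrightarrow> x \<noteq> 0 \<Longrightarrow> 0 < d x"
  unfolding homogeneous_norm_def by blast

lemma homogeneous_norm_euler:
  fixes d :: "('n::finite,'N::finite) heis \<Rightarrow> real"
  assumes hom: "homogeneous_norm d" and D: "(d has_derivative D) (at x)"
  shows "D (fst x, 2 *\<^sub>R snd x) = d x"
proof -
  have "((\<lambda>c::real. (c *\<^sub>R fst x, c\<^sup>2 *\<^sub>R snd x)) has_derivative (\<lambda>h. h *\<^sub>R (fst x, 2 *\<^sub>R snd x))) (at 1)"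
    by (auto intro!: derivative_eq_intros simp: fun_eq_iff)
  moreover have "(d has_derivative D) (at (1 *\<^sub>R fst x, 1\<^sup>2 *\<^sub>R snd x))"
    using D by simp
  ultimately have "((\<lambda>c. d (c *\<^sub>R fst x, c\<^sup>2 *\<^sub>R snd x)) has_derivative (\<lambda>h. D (h *\<^sub>R (fst x, 2 *\<^sub>R snd x)))) (at 1)"
    by (rule has_derivative_compose)
  moreover have "(\<lambda>h. D (h *\<^sub>R (fst x, 2 *\<^sub>R snd x))) = (\<lambda>h. D (fst x, 2 *\<^sub>R snd x) * h)"
    by (simp only: linear_scale[OF has_derivative_linear[OF D]] real_scaleR_def mult.commute)
  ultimately have "((\<lambda>c. d (c *\<^sub>R fst x, c\<^sup>2 *\<^sub>R snd x)) has_real_derivative D (fst x, 2 *\<^sub>R snd x)) (at 1)"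
    by (simp add: has_field_derivative_def)
  moreover have "((\<lambda>c. d (c *\<^sub>R fst x, c\<^sup>2 *\<^sub>R snd x)) has_real_derivative d x) (at 1)"
  proof -
    have "\<forall>\<^sub>F c in nhds (1::real). c \<in> {0<..}"
      by (rule eventually_nhds_in_open) auto
    then have ev: "\<forall>\<^sub>F c in nhds (1::real). d (c *\<^sub>R fst x, c\<^sup>2 *\<^sub>R snd x) = c * d x"
      using hom unfolding homogeneous_norm_def heis_dil_def by (auto elim!: eventually_mono)
    have "((\<lambda>c. c * d x) has_real_derivative d x) (at 1)"
      by (auto intro!: derivative_eq_intros)
    then show ?thesis
      using DERIV_cong_ev[OF refl ev refl] by simp
  qed
  ultimately show ?thesis
    by (rule DERIV_unique)
qed

section \<open>Evaluation of both sides\<close>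

lemma set_integral_weighted_euler_op:
  fixes d w :: "('n::finite,'N::finite) heis \<Rightarrow> real"
  assumes hom: "homogeneous_norm d" and d: "C1_on (UNIV - {0}) d d'"
    and K: "compact K" "K \<subseteq> UNIV - {0}" and w: "C1_on (UNIV - {0}) w w'" "{x. w x \<noteq> 0} \<subseteq> K"
  shows "(LINT x:UNIV - {0}|lborel. d x powr (- a) * w' x (fst x, 2 *\<^sub>R snd x))
    = (a - 2 * real CARD('N) * (real CARD('n) + 1)) * (LINT x:UNIV - {0}|lborel. d x powr (- a) * w x)"
proof -
  have S: "open (UNIV - {0} :: ('n,'N) heis set)"
    by (simp add: open_Diff)
  have dpos: "\<forall>x\<in>UNIV - {0}. 0 < d x"
    using homogeneous_norm_pos[OF hom] by auto
  note P = set_integral_by_parts_powr_weight[OF S K d dpos w linear_euler_field, of a, unfolded trace_euler_field]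
  have "d x powr (- a - 1) * d' x (fst x, 2 *\<^sub>R snd x) * w x = d x powr (- a) * w x" if "x \<in> UNIV - {0}" for x
    using homogeneous_norm_euler[OF hom C1_onD[OF d that]] powr_mult_base[of "d x" "- a - 1"]
      bspec[OF dpos that] by (simp add: mult.commute)
  then have "(LINT x:UNIV - {0}|lborel. d x powr (- a - 1) * d' x (fst x, 2 *\<^sub>R snd x) * w x)
      = (LINT x:UNIV - {0}|lborel. d x powr (- a) * w x)"
    by (intro set_lebesgue_integral_cong) auto
  then show ?thesis
    unfolding P(2) by (simp add: algebra_simps)
qed

lemma set_integral_powr_weight_euler:
  fixes d w :: "('n::finite,'N::finite) heis \<Rightarrow> real"
  assumes hom: "homogeneous_norm d" and d: "C1_on (UNIV - {0}) d d'"
    and K: "compact K" "K \<subseteq> UNIV - {0}" and w: "continuous_on (UNIV - {0}) w" "{x. w x \<noteq> 0} \<subseteq> K"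
  shows "(LINT x:UNIV - {0}|lborel. d x powr (- a - 1) * d' x (fst x, 0) * w x)
      + 2 * (LINT x:UNIV - {0}|lborel. d x powr (- a - 1) * d' x (0, snd x) * w x)
    = (LINT x:UNIV - {0}|lborel. d x powr (- a) * w x)"
proof -
  let ?S = "UNIV - {0} :: ('n,'N) heis set"
  have dpos: "\<forall>x\<in>?S. 0 < d x"
    using homogeneous_norm_pos[OF hom] by auto
  have "set_integrable lborel ?S (\<lambda>x. d x powr (- a - 1) * d' x (V x) * w x)" if "continuous_on ?S V" for V
    using w(2) by (intro set_integrable_compact_support[OF K] continuous_intros w(1)
        C1_on_imp_continuous_on[OF C1_on_powr[OF d dpos]] C1_on_continuous_along[OF d] that) auto
  then have "(LINT x:?S|lborel. d x powr (- a - 1) * d' x (fst x, 0) * w x)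
      + 2 * (LINT x:?S|lborel. d x powr (- a - 1) * d' x (0, snd x) * w x)
    = (LINT x:?S|lborel. d x powr (- a - 1) * d' x (fst x, 0) * w x + 2 * (d x powr (- a - 1) * d' x (0, snd x) * w x))"
    by (simp add: set_integral_add continuous_intros)
  also have "\<dots> = (LINT x:?S|lborel. d x powr (- a) * w x)"
  proof (intro set_lebesgue_integral_cong allI impI)
    show "?S \<in> sets lborel"
      by simp
    fix x assume x: "x \<in> ?S"
    have eu: "d' x (fst x, 0) + 2 * d' x (0, snd x) = d x"
      using homogeneous_norm_euler[OF hom C1_onD[OF d x]]
        linear_add[OF C1_on_linear_derivative[OF d x], of "(fst x, 0)" "(0, 2 *\<^sub>R snd x)"]
        linear_scale[OF C1_on_linear_derivative[OF d x], of 2 "(0, snd x)"]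
      by simp
    have "d x powr (- a - 1) * d' x (fst x, 0) * w x + 2 * (d x powr (- a - 1) * d' x (0, snd x) * w x)
        = d x powr (- a - 1) * (d' x (fst x, 0) + 2 * d' x (0, snd x)) * w x"
      by (simp add: algebra_simps)
    also have "\<dots> = d x powr (- a) * w x"
      unfolding eu using powr_mult_base[of "d x" "- a - 1"] bspec[OF dpos x] by (simp add: mult.commute)
    finally show "d x powr (- a - 1) * d' x (fst x, 0) * w x + 2 * (d x powr (- a - 1) * d' x (0, snd x) * w x)
        = d x powr (- a) * w x" .
  qed
  finally show ?thesis .
qed

lemma set_integral_hfield_bracket:
  fixes d w :: "('n::finite,'N::finite) heis \<Rightarrow> real"
  assumes S: "open S" "compact K" "K \<subseteq> S" and d: "C2_on S d d' d''" "\<forall>x\<in>S. 0 < d x"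
    and w: "C1_on S w w'" "{x. w x \<noteq> 0} \<subseteq> K"
  shows "(LINT x:S|lborel. d x powr r * snd x $ j
        * (w' x (hfield j i 2 x) * d' x (hfield j i 1 x) - w' x (hfield j i 1 x) * d' x (hfield j i 2 x)))
    = (LINT x:S|lborel. d x powr r * w x * (2 * (fst x $ j $ i $ 1 * d' x (hfield j i 1 x)
        + fst x $ j $ i $ 2 * d' x (hfield j i 2 x)) - 4 * (snd x $ j * d' x (0, axis j 1))))"
proof -
  have t: "bounded_linear (\<lambda>x::('n,'N) heis. snd x $ j)"
    by (intro bounded_linear_compose[OF bounded_linear_vec_nth] bounded_linear_snd)
  have m: "C1_on S (\<lambda>x. d x powr r * snd x $ j)
      (\<lambda>x v. d x powr r * snd v $ j + r * d x powr (r - 1) * d' x v * snd x $ j)"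
    by (rule C1_on_mult[OF C1_on_powr[OF C2_on_C1_on[OF d(1)] d(2), of r] C1_on_bounded_linear[OF t]])
  note B = set_integral_bracket_by_parts[where A="hfield_lin j i 1" and B="hfield_lin j i 2"
      and a="(axis j (axis i (axis 1 1)), 0)" and b="(axis j (axis i (axis 2 1)), 0)",
      OF S m d(1) w linear_hfield_lin trace_hfield_lin linear_hfield_lin trace_hfield_lin,
      folded hfield_eq_hfield_lin, unfolded hfield_lin_bracket]
  show ?thesis
    unfolding B
  proof (intro set_lebesgue_integral_cong allI impI)
    show "S \<in> sets lborel"
      using S(1) by simp
    fix x assume "x \<in> S"
    have scale: "d' x (4 *\<^sub>R (0, axis j 1)) = 4 * d' x (0, axis j 1)"
      by (rule linear_scale[OF C1_on_linear_derivative[OF C2_on_C1_on[OF d(1)] \<open>x \<in> S\<close>], of 4, unfolded real_scaleR_def])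
    show "w x * ((d x powr r * snd (hfield j i 1 x) $ j
          + r * d x powr (r - 1) * d' x (hfield j i 1 x) * snd x $ j) * d' x (hfield j i 2 x)
        - (d x powr r * snd (hfield j i 2 x) $ j
          + r * d x powr (r - 1) * d' x (hfield j i 2 x) * snd x $ j) * d' x (hfield j i 1 x)
        - d x powr r * snd x $ j * d' x (4 *\<^sub>R (0, axis j 1)))
      = d x powr r * w x * (2 * (fst x $ j $ i $ 1 * d' x (hfield j i 1 x)
        + fst x $ j $ i $ 2 * d' x (hfield j i 2 x)) - 4 * (snd x $ j * d' x (0, axis j 1)))"
      using scale by (simp add: snd_hfield_nth algebra_simps)
  qed
qed

lemma set_integrable_hfield_bracket:
  fixes d w :: "('n::finite,'N::finite) heis \<Rightarrow> real"
  assumes K: "compact K" "K \<subseteq> S" and d: "C1_on S d d'" "\<forall>x\<in>S. 0 < d x"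
    and w: "C1_on S w w'" "{x. w x \<noteq> 0} \<subseteq> K"
  shows "set_integrable lborel S (\<lambda>x. d x powr r * snd x $ j
    * (w' x (hfield j i 2 x) * d' x (hfield j i 1 x) - w' x (hfield j i 1 x) * d' x (hfield j i 2 x)))"
  using C1_on_derivative_eq_0[OF w(1) compact_imp_closed[OF K(1)] w(2)]
  by (intro set_integrable_compact_support[OF K] continuous_intros C1_on_imp_continuous_on[OF C1_on_powr[OF d]]
      C1_on_continuous_along[OF d(1)] C1_on_continuous_along[OF w(1)] continuous_on_hfield) auto

lemma set_integral_sum_hfield_brackets:
  fixes d w :: "('n::finite,'N::finite) heis \<Rightarrow> real"
  assumes S: "open S" "compact K" "K \<subseteq> S" and d: "C2_on S d d' d''" "\<forall>x\<in>S. 0 < d x"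
    and w: "C1_on S w w'" "{x. w x \<noteq> 0} \<subseteq> K"
  defines "br \<equiv> \<lambda>j i x. w' x (hfield j i 2 x) * d' x (hfield j i 1 x) - w' x (hfield j i 1 x) * d' x (hfield j i 2 x)"
  shows "set_integrable lborel S (\<lambda>x. \<Sum>j\<in>UNIV. \<Sum>i\<in>UNIV. d x powr r * snd x $ j * br j i x)"
    and "(LINT x:S|lborel. \<Sum>j\<in>UNIV. \<Sum>i\<in>UNIV. d x powr r * snd x $ j * br j i x)
      = 2 * (LINT x:S|lborel. d x powr r * d' x (fst x, 0) * w x)
        - 4 * real CARD('n) * (LINT x:S|lborel. d x powr r * d' x (0, snd x) * w x)"
proof -
  have d1: "C1_on S d d'"
    using C2_on_C1_on[OF d(1)] .
  have int_br: "set_integrable lborel S (\<lambda>x. d x powr r * snd x $ j * br j i x)" for j i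
    unfolding br_def by (rule set_integrable_hfield_bracket[OF S(2,3) d1 d(2) w])
  then show "set_integrable lborel S (\<lambda>x. \<Sum>j\<in>UNIV. \<Sum>i\<in>UNIV. d x powr r * snd x $ j * br j i x)"
    by (intro set_integrable_sum)
  have int_w: "set_integrable lborel S (\<lambda>x. d x powr r * g x * w x)" if "continuous_on S g" for g
    by (rule set_integrable_mult_compact_support[OF S(2,3) _ C1_on_imp_continuous_on[OF w(1)] w(2)])
      (intro continuous_intros C1_on_imp_continuous_on[OF C1_on_powr[OF d1 d(2)]] that)
  define T where "T j i x = 2 * (fst x $ j $ i $ 1 * d' x (hfield j i 1 x) + fst x $ j $ i $ 2 * d' x (hfield j i 2 x))
    - 4 * (snd x $ j * d' x (0, axis j 1))" for j i x
  have "set_integrable lborel S (\<lambda>x. d x powr r * T j i x * w x)" for j i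
    unfolding T_def by (intro int_w continuous_intros C1_on_continuous_along[OF d1] continuous_on_hfield)
  then have int_T: "set_integrable lborel S (\<lambda>x. d x powr r * w x * T j i x)" for j i
    by (simp add: mult_ac)
  have "(LINT x:S|lborel. \<Sum>j\<in>UNIV. \<Sum>i\<in>UNIV. d x powr r * snd x $ j * br j i x)
      = (\<Sum>j\<in>UNIV. \<Sum>i\<in>UNIV. LINT x:S|lborel. d x powr r * w x * T j i x)"
    using int_br unfolding br_def T_def
    by (simp add: set_integral_sum set_integrable_sum set_integral_hfield_bracket[OF S d w])
  also have "\<dots> = (LINT x:S|lborel. d x powr r * w x * (\<Sum>j\<in>UNIV. \<Sum>i\<in>UNIV. T j i x))"
    using int_T by (simp add: set_integral_sum set_integrable_sum sum_distrib_left)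
  also have "\<dots> = (LINT x:S|lborel. 2 * (d x powr r * d' x (fst x, 0) * w x)
      - 4 * real CARD('n) * (d x powr r * d' x (0, snd x) * w x))"
  proof (intro set_lebesgue_integral_cong allI impI)
    show "S \<in> sets lborel"
      using S(1) by simp
    fix x assume "x \<in> S"
    have T: "(\<Sum>j\<in>UNIV. \<Sum>i\<in>UNIV. T j i x) = 2 * d' x (fst x, 0) - 4 * real CARD('n) * d' x (0, snd x)"
      unfolding T_def by (rule sum_hfield_bracket_terms[OF C1_on_linear_derivative[OF d1 \<open>x \<in> S\<close>]])
    show "d x powr r * w x * (\<Sum>j\<in>UNIV. \<Sum>i\<in>UNIV. T j i x)
        = 2 * (d x powr r * d' x (fst x, 0) * w x) - 4 * real CARD('n) * (d x powr r * d' x (0, snd x) * w x)"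
      unfolding T by (simp add: algebra_simps)
  qed
  also have "\<dots> = 2 * (LINT x:S|lborel. d x powr r * d' x (fst x, 0) * w x)
      - 4 * real CARD('n) * (LINT x:S|lborel. d x powr r * d' x (0, snd x) * w x)"
    using int_w[OF C1_on_continuous_along[OF d1, of "\<lambda>x. (fst x, 0)"]]
      int_w[OF C1_on_continuous_along[OF d1, of "\<lambda>x. (0, snd x)"]]
    by (simp add: set_integral_diff continuous_intros)
  finally show "(LINT x:S|lborel. \<Sum>j\<in>UNIV. \<Sum>i\<in>UNIV. d x powr r * snd x $ j * br j i x)
      = 2 * (LINT x:S|lborel. d x powr r * d' x (fst x, 0) * w x)
        - 4 * real CARD('n) * (LINT x:S|lborel. d x powr r * d' x (0, snd x) * w x)" .
qed

lemma set_integral_hgrad_inner_Zd: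
  fixes d w :: "('n::finite,'N::finite) heis \<Rightarrow> real"
  assumes hom: "homogeneous_norm d" and d: "C2_on (UNIV - {0}) d (\<lambda>x. frechet_derivative d (at x)) d''"
    and K: "compact K" "K \<subseteq> UNIV - {0}" and w: "C1_on (UNIV - {0}) w w'" "{x. w x \<noteq> 0} \<subseteq> K"
  shows "(LINT x:UNIV - {0}|lborel. d x powr (1 - p * \<theta>) * ((\<chi> j i k. w' x (hfield j i k x)) \<bullet> Zd p \<theta> d x))
    = (p * \<theta> - 2 * real CARD('N) * (real CARD('n) + 1)) * (LINT x:UNIV - {0}|lborel. d x powr (- (p * \<theta>)) * w x)"
proof -
  let ?S = "UNIV - {0} :: ('n,'N) heis set" and ?D = "\<lambda>x. frechet_derivative d (at x)"
  define a where "a = p * \<theta>"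
  define n where "n = real CARD('n)"
  have S: "open ?S"
    by (simp add: open_Diff)
  have dpos: "\<forall>x\<in>?S. 0 < d x"
    using homogeneous_norm_pos[OF hom] by auto
  have d1: "C1_on ?S d ?D"
    using C2_on_C1_on[OF d] .
  define IZ where "IZ = (LINT x:?S|lborel. d x powr (- a - 1) * ?D x (fst x, 0) * w x)"
  define IT where "IT = (LINT x:?S|lborel. d x powr (- a - 1) * ?D x (0, snd x) * w x)"
  define G where "G = (LINT x:?S|lborel. d x powr (- a) * w x)"
  note Z = set_integral_by_parts_powr_weight[OF S K d1 dpos w linear_fst_field, of a, unfolded trace_fst_field]
  note Br = set_integral_sum_hfield_brackets[OF S K d dpos w, of "- a - 1"]
  have euler: "IZ + 2 * IT = G"
    unfolding IZ_def IT_def G_def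
    by (rule set_integral_powr_weight_euler[OF hom d1 K C1_on_imp_continuous_on[OF w(1)] w(2)])
  have "(LINT x:?S|lborel. d x powr (1 - p * \<theta>) * ((\<chi> j i k. w' x (hfield j i k x)) \<bullet> Zd p \<theta> d x))
      = (LINT x:?S|lborel. (n + 1) / n * (d x powr (- a) * w' x (fst x, 0))
          - a / (2 * n) * (\<Sum>j\<in>UNIV. \<Sum>i\<in>UNIV. d x powr (- a - 1) * snd x $ j
            * (w' x (hfield j i 2 x) * ?D x (hfield j i 1 x) - w' x (hfield j i 1 x) * ?D x (hfield j i 2 x))))"
    unfolding a_def n_def
    using hgrad_inner_Zd[OF C1_on_linear_derivative[OF w(1)] bspec[OF dpos]]
    by (intro set_lebesgue_integral_cong) auto
  also have "\<dots> = (n + 1) / n * (a * IZ - 2 * real CARD('N) * n * G) - a / (2 * n) * (2 * IZ - 4 * n * IT)"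
    using Z Br unfolding IZ_def IT_def G_def n_def by (simp add: set_integral_diff)
  also have "\<dots> = (a - 2 * real CARD('N) * (n + 1)) * G"
    using euler[symmetric] by (simp add: n_def field_simps)
  finally show ?thesis
    unfolding a_def n_def G_def .
qed

lemma integral_euler_op_eq:
  fixes d u :: "('n::finite,'N::finite) heis \<Rightarrow> real"
  assumes hom: "homogeneous_norm d" and d: "C1_on (UNIV - {0}) d d'" and p: "1 < p"
    and u: "C1_on (UNIV - {0}) u (\<lambda>x. frechet_derivative u (at x))"
    and K: "compact K" "K \<subseteq> UNIV - {0}" "{x. u x \<noteq> 0} \<subseteq> K"
  shows "(\<integral>x. \<bar>u x\<bar> powr (p - 2) * u x * euler_op u x / d x powr a \<partial>lborel)
    = (a - 2 * real CARD('N) * (real CARD('n) + 1)) * (LINT x:UNIV - {0}|lborel. d x powr (- a) * (\<bar>u x\<bar> powr p / p))"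
proof -
  have u0: "u x = 0" if "x \<notin> UNIV - {0}" for x
    using K(2,3) that by blast
  have "(\<integral>x. \<bar>u x\<bar> powr (p - 2) * u x * euler_op u x / d x powr a \<partial>lborel)
      = (LINT x:UNIV - {0}|lborel. d x powr (- a)
          * (\<bar>u x\<bar> powr (p - 2) * u x * frechet_derivative u (at x) (fst x, 2 *\<^sub>R snd x)))"
    by (intro integral_eq_set_integral) (simp_all add: u0 euler_op_def powr_minus_divide)
  also have "\<dots> = (a - 2 * real CARD('N) * (real CARD('n) + 1)) * (LINT x:UNIV - {0}|lborel. d x powr (- a) * (\<bar>u x\<bar> powr p / p))"
    using K(3) p by (intro set_integral_weighted_euler_op[OF hom d K(1,2) C1_on_abs_powr[OF u p]]) auto
  finally show ?thesis .
qed

lemma integral_hgrad_inner_Zd_eq: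
  fixes d u :: "('n::finite,'N::finite) heis \<Rightarrow> real"
  assumes hom: "homogeneous_norm d" and d: "C2_on (UNIV - {0}) d (\<lambda>x. frechet_derivative d (at x)) d''"
    and p: "1 < p" and u: "C1_on (UNIV - {0}) u (\<lambda>x. frechet_derivative u (at x))"
    and K: "compact K" "K \<subseteq> UNIV - {0}" "{x. u x \<noteq> 0} \<subseteq> K"
  shows "(\<integral>x. \<bar>u x\<bar> powr (p - 2) * u x / d x powr (p * \<theta> - 1) * (hgrad u x \<bullet> Zd p \<theta> d x) \<partial>lborel)
    = (p * \<theta> - 2 * real CARD('N) * (real CARD('n) + 1))
      * (LINT x:UNIV - {0}|lborel. d x powr (- (p * \<theta>)) * (\<bar>u x\<bar> powr p / p))"
proof -
  have u0: "u x = 0" if "x \<notin> UNIV - {0}" for x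
    using K(2,3) that by blast
  have "(\<chi> j i k. \<bar>u x\<bar> powr (p - 2) * u x * frechet_derivative u (at x) (hfield j i k x))
      = (\<bar>u x\<bar> powr (p - 2) * u x) *\<^sub>R hgrad u x" for x
    by (simp add: vec_eq_iff hgrad_def)
  moreover have "d x powr (1 - p * \<theta>) = 1 / d x powr (p * \<theta> - 1)" for x
    using powr_minus_divide[of "d x" "p * \<theta> - 1"] by simp
  ultimately have "(\<integral>x. \<bar>u x\<bar> powr (p - 2) * u x / d x powr (p * \<theta> - 1) * (hgrad u x \<bullet> Zd p \<theta> d x) \<partial>lborel)
      = (LINT x:UNIV - {0}|lborel. d x powr (1 - p * \<theta>)
          * ((\<chi> j i k. \<bar>u x\<bar> powr (p - 2) * u x * frechet_derivative u (at x) (hfield j i k x)) \<bullet> Zd p \<theta> d x))"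
    by (intro integral_eq_set_integral) (simp_all add: u0)
  also have "\<dots> = (p * \<theta> - 2 * real CARD('N) * (real CARD('n) + 1))
      * (LINT x:UNIV - {0}|lborel. d x powr (- (p * \<theta>)) * (\<bar>u x\<bar> powr p / p))"
    using K(3) p by (intro set_integral_hgrad_inner_Zd[OF hom d K(1,2) C1_on_abs_powr[OF u p]]) auto
  finally show ?thesis .
qed

theorem proposition4p1:
  fixes d u :: "('n::finite,'N::finite) heis \<Rightarrow> real" and p \<theta> :: real
  assumes "homogeneous_norm d"
    and "smooth_on (UNIV - {0}) d"
    and "p \<ge> 2"
    and "smooth_on (UNIV - {0}) u"
    and "compact (closure {x. u x \<noteq> 0})"
    and "closure {x. u x \<noteq> 0} \<subseteq> UNIV - {0}"
  shows "(\<integral>x. \<bar>u x\<bar> powr (p - 2) * u x * euler_op u x / d x powr (p * \<theta>) \<partial>lborel)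
       = (\<integral>x. \<bar>u x\<bar> powr (p - 2) * u x / d x powr (p * \<theta> - 1) * (hgrad u x \<bullet> Zd p \<theta> d x) \<partial>lborel)"
proof -
  note d = smooth_on_imp_C2_on[OF assms(2)]
  note u = smooth_on_imp_C1_on[OF assms(4)]
  have p: "1 < p"
    using assms(3) by simp
  note K = assms(5,6) closure_subset[of "{x. u x \<noteq> 0}"]
  show ?thesis
    using integral_euler_op_eq[OF assms(1) C2_on_C1_on[OF d] p u K, of "p * \<theta>"]
      integral_hgrad_inner_Zd_eq[OF assms(1) d p u K, of \<theta>]
    by simp
qed

end
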